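(* Let $\|\mathbf{f}(\mathbf{x})\|\le R$ and $\|\mathbf{g}(\mathbf{x}')\|\le R$ almost surely for some $R>0$. Let $\mathsf{V}_{\mathbf{f}}\triangleq\mathbb{E}_{\rho_0(\mathbf{x})}[(\mathbf{f}(\mathbf{x})\mathbf{f}(\mathbf{x})^\intercal-\mathsf{M}_{\rho_0}[\mathbf{f}])^2]\in\mathbb{R}^{k\times k}$ and $\mathsf{V}_{\mathbf{g}}\triangleq\mathbb{E}_{\rho_1(\mathbf{x}')}[(\mathbf{g}(\mathbf{x}')\mathbf{g}(\mathbf{x}')^\intercal-\mathsf{M}_{\rho_1}[\mathbf{g}])^2]\in\mathbb{R}^{k\times k}$, and for $\mathsf{V}\succeq0$ let $r(\mathsf{V})\triangleq\tr(\mathsf{V})/\|\mathsf{V}\|_{\mathrm{op}}$ denote its intrinsic dimension. Then, for any $\delta\in(0,1)$, with probability at least $1-\delta$, $$|\hat{\mathcal{L}}-\mathcal{L}|\le R^2\Biggl\{\sqrt{\frac{16}{N}\log\frac{6}{\delta}}+\frac{8}{3N}\log\frac{6}{\delta}+\sqrt{\frac{2\|\mathsf{V}_{\mathbf{f}}\|_{\mathrm{op}}}{N_0}\log\frac{12r(\mathsf{V}_{\mathbf{f}})}{\delta}}+\frac{2R^2}{3N_0}\log\frac{12r(\mathsf{V}_{\mathbf{f}})}{\delta}+\sqrt{\frac{2\|\mathsf{V}_{\mathbf{g}}\|_{\mathrm{op}}}{N_1}\log\frac{12r(\mathsf{V}_{\mathbf{g}})}{\delta}}+\frac{2R^2}{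3N_1}\log\frac{12r(\mathsf{V}_{\mathbf{g}})}{\delta}\Biggr\}.$$
   Context: Let $p(\mathbf{x}'|\mathbf{x})$ be the transition density of a time-homogeneous Markov process on $\mathcal{X}\subseteq\mathbb{R}^d$ and $\rho_0,\rho_1$ the distributions of current and future states. For $\mathbf{f},\mathbf{g}\colon\mathcal{X}\to\mathbb{R}^k$, define the second-moment matrices $\mathsf{M}_{\rho_0}[\mathbf{f}]\triangleq\mathbb{E}_{\rho_0(\mathbf{x})}[\mathbf{f}(\mathbf{x})\mathbf{f}(\mathbf{x})^\intercal]$, $\mathsf{M}_{\rho_1}[\mathbf{g}]\triangleq\mathbb{E}_{\rho_1(\mathbf{x}')}[\mathbf{g}(\mathbf{x}')\mathbf{g}(\mathbf{x}')^\intercal]$, and the joint second-moment matrix $\mathsf{T}[\mathbf{f},\mathbf{g}]\triangleq\mathbb{E}_{\rho_0(\mathbf{x})p(\mathbf{x}'|\mathbf{x})}[\mathbf{f}(\mathbf{x})\mathbf{g}(\mathbf{x}')^\intercal]$. The population low-rank approximation (LoRA) objective is $\mathcal{L}=\mathcal{L}_{\mathsf{lora}}(\mathbf{f},\mathbf{g})\triangleq-2\tr(\mathsf{T}[\mathbf{f},\mathbf{g}])+\tr(\mathsf{M}_{\rho_0}[\mathbf{f}]\mathsf{M}_{\rho_1}[\mathbf{g}])$, and $\hat{\mathcal{L}}$ is the same expression with each matrix replaced by its empirical estimate: $\hat{\mathsf{T}}[\mathbf{f},\mathbf{g}]\triangleq\frac1N\sum_{t=1}^N\mathbf{f}(\mathbf{x}_t)\mathbf{g}(\mathbf{x}_t')^\intercal$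 with $(\mathbf{x}_t,\mathbf{x}_t')$ i.i.d. from $\rho_0(\mathbf{x})p(\mathbf{x}'|\mathbf{x})$; $\hat{\mathsf{M}}_{\rho_0}[\mathbf{f}]\triangleq\frac1{N_0}\sum_{i=1}^{N_0}\mathbf{f}(\breve{\mathbf{x}}_i)\mathbf{f}(\breve{\mathbf{x}}_i)^\intercal$ with $\breve{\mathbf{x}}_i$ i.i.d. from $\rho_0$; and $\hat{\mathsf{M}}_{\rho_1}[\mathbf{g}]\triangleq\frac1{N_1}\sum_{j=1}^{N_1}\mathbf{g}(\breve{\mathbf{x}}_j')\mathbf{g}(\breve{\mathbf{x}}_j')^\intercal$ with $\breve{\mathbf{x}}_j'$ i.i.d. from $\rho_1$, the samples $\{\breve{\mathbf{x}}_i\}$ and $\{\breve{\mathbf{x}}_j'\}$ being independent of each other. *)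

theory Defs
  imports "HOL-Probability.Probability"
begin

definition outer :: "real^'k \<Rightarrow> real^'k \<Rightarrow> real^'k^'k" where
  "outer u v = (\<chi> i j. u $ i * v $ j)"

definition opnorm :: "real^'k^'k \<Rightarrow> real" where
  "opnorm A = onorm (\<lambda>x. A *v x)"

definition intdim :: "real^'k^'k \<Rightarrow> real" where
  "intdim V = trace V / opnorm V"

text \<open>Joint law rho0(x) p(x'|x) of (current, future) state; p is a transition
  density w.r.t. Lebesgue measure on the state space X \<subseteq> R^d.\<close>
definition markov_joint ::
  "(real^'d) measure \<Rightarrow> (real^'d \<Rightarrow> real^'d \<Rightarrow> real) \<Rightarrow> (real^'d) set
     \<Rightarrow> ((real^'d) \<times> (real^'d)) measure" where
  "markov_joint \<rho>0 p X =
     density (\<rho>0 \<Otimes>\<^sub>M lborel) (\<lambda>(x, x'). ennreal (indicator X x' * p x x'))"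

definition future_dist :: "((real^'d) \<times> (real^'d)) measure \<Rightarrow> (real^'d) measure" where
  "future_dist J = distr J borel snd"

definition sec_mom :: "(real^'d) measure \<Rightarrow> (real^'d \<Rightarrow> real^'k) \<Rightarrow> real^'k^'k" where
  "sec_mom \<rho> f = (\<integral>x. outer (f x) (f x) \<partial>\<rho>)"

definition cross_mom :: "((real^'d) \<times> (real^'d)) measure \<Rightarrow> (real^'d \<Rightarrow> real^'k)
     \<Rightarrow> (real^'d \<Rightarrow> real^'k) \<Rightarrow> real^'k^'k" where
  "cross_mom J f g = (\<integral>z. outer (f (fst z)) (g (snd z)) \<partial>J)"

definition lora :: "((real^'d) \<times> (real^'d)) measure \<Rightarrow> (real^'d) measure \<Rightarrow> (real^'d) measure
     \<Rightarrow> (real^'d \<Rightarrow> real^'k) \<Rightarrow> (real^'d \<Rightarrow> real^'k) \<Rightarrow> real" where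
  "lora J \<rho>0 \<rho>1 f g = - 2 * trace (cross_mom J f g) + trace (sec_mom \<rho>0 f ** sec_mom \<rho>1 g)"

definition var_mat :: "(real^'d) measure \<Rightarrow> (real^'d \<Rightarrow> real^'k) \<Rightarrow> real^'k^'k" where
  "var_mat \<rho> f = (\<integral>x. (outer (f x) (f x) - sec_mom \<rho> f) ** (outer (f x) (f x) - sec_mom \<rho> f) \<partial>\<rho>)"

definition emp_cross :: "(real^'d \<Rightarrow> real^'k) \<Rightarrow> (real^'d \<Rightarrow> real^'k)
     \<Rightarrow> (nat \<Rightarrow> (real^'d) \<times> (real^'d)) \<Rightarrow> nat \<Rightarrow> real^'k^'k" where
  "emp_cross f g zs N = (1 / real N) *\<^sub>R (\<Sum>t<N. outer (f (fst (zs t))) (g (snd (zs t))))"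

definition emp_mom :: "(real^'d \<Rightarrow> real^'k) \<Rightarrow> (nat \<Rightarrow> real^'d) \<Rightarrow> nat \<Rightarrow> real^'k^'k" where
  "emp_mom f xs n = (1 / real n) *\<^sub>R (\<Sum>i<n. outer (f (xs i)) (f (xs i)))"

definition emp_lora :: "(real^'d \<Rightarrow> real^'k) \<Rightarrow> (real^'d \<Rightarrow> real^'k)
     \<Rightarrow> (nat \<Rightarrow> (real^'d) \<times> (real^'d)) \<Rightarrow> nat \<Rightarrow> (nat \<Rightarrow> real^'d) \<Rightarrow> nat
     \<Rightarrow> (nat \<Rightarrow> real^'d) \<Rightarrow> nat \<Rightarrow> real" where
  "emp_lora f g zs N xs N0 ys N1 =
     - 2 * trace (emp_cross f g zs N) + trace (emp_mom f xs N0 ** emp_mom g ys N1)"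

end

theory Submission
  imports Defs
begin

(* Writing ^ for empirical estimates, the deviation splits as
     -2 (tr T^ - tr T) + (tr (M0^ M1^) - tr (M0 M1^)) + (tr (M0 M1^) - tr (M0 M1)),
   and each term is an empirical mean of i.i.d. bounded scalars, so scalar Bernstein bounds
   it with probability 1 - delta/3.  The summands <f(x), g(x')> are bounded by R^2.  The
   summands tr (B f f^T) - tr (B M0), where B is the second-moment matrix of a feature bounded
   by R, have range R^4 and second moment at most R^4 ||V_f||_op, because
   (v^T C v)^2 <= |v|^2 v^T C^2 v and E[C^2] = V_f.  In the middle term B = M1^ is random;
   it is handled conditionally on the W-samples, which are independent of the U-samples.
   Finally r(V) >= 1 turns log (6/delta) into the weaker log (12 r(V)/delta). *)

section \<open>Bernstein's inequality\<close>

lemma exp_le_quadratic_of_nonpos: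
  fixes x :: real
  assumes "x \<le> 0"
  shows "exp x \<le> 1 + x + x\<^sup>2 / 2"
proof -
  define k where "k = (\<lambda>x::real. 1 + x + x\<^sup>2 / 2 - exp x)"
  have k_deriv: "DERIV k y :> 1 + y - exp y" for y :: real
    unfolding k_def by (auto intro!: derivative_eq_intros simp: field_simps power2_eq_square)
  have "k 0 \<le> k x"
    by (rule DERIV_nonpos_imp_nonincreasing[OF assms]) (use k_deriv exp_ge_add_one_self in fastforce)
  then show ?thesis
    by (simp add: k_def)
qed

lemma exp_mult_one_minus_third_le:
  fixes x :: real
  assumes "0 \<le> x"
  shows "exp x * (1 - x / 3) \<le> 1 + 2 * x / 3 + x\<^sup>2 / 6"
proof -
  define h where "h = (\<lambda>x::real. 1 + 2 * x / 3 + x\<^sup>2 / 6 - exp x * (1 - x / 3))"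
  define h' where "h' = (\<lambda>x::real. 2 / 3 + x / 3 - exp x * (2 / 3 - x / 3))"
  have h_deriv: "DERIV h y :> h' y" for y :: real
    unfolding h_def h'_def
    by (auto intro!: derivative_eq_intros simp: field_simps power2_eq_square)
  have h'_deriv: "DERIV h' y :> (1 - exp y * (1 - y)) / 3" for y :: real
    unfolding h'_def by (auto intro!: derivative_eq_intros simp: field_simps)
  have h'_deriv_nonneg: "0 \<le> (1 - exp y * (1 - y)) / 3" for y :: real
  proof -
    have "exp y * (1 - y) \<le> exp y * exp (- y)"
      using exp_ge_add_one_self[of "- y"] by (intro mult_left_mono) auto
    then show ?thesis
      by (simp add: exp_minus)
  qed
  have "h' 0 \<le> h' y" if "0 \<le> y" for y
    by (rule DERIV_nonneg_imp_nondecreasing[OF that]) (use h'_deriv h'_deriv_nonneg in blast)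
  then have h'_nonneg: "0 \<le> h' y" if "0 \<le> y" for y
    using that by (simp add: h'_def)
  have "h 0 \<le> h x"
    by (rule DERIV_nonneg_imp_nondecreasing[OF assms]) (use h_deriv h'_nonneg in blast)
  then show ?thesis
    by (simp add: h_def)
qed

lemma exp_le_bernstein:
  fixes x c :: real
  assumes "0 \<le> c" "c < 3" "x \<le> c"
  shows "exp x \<le> 1 + x + x\<^sup>2 / (2 * (1 - c / 3))"
proof (cases "x \<le> 0")
  case True
  have "x\<^sup>2 / 2 \<le> x\<^sup>2 / (2 * (1 - c / 3))"
    using assms by (intro divide_left_mono) auto
  then show ?thesis
    using exp_le_quadratic_of_nonpos[OF True] by linarith
next
  case False
  then have x: "0 < x" "x < 3"
    using assms by auto
  have "exp x * (1 - x / 3) \<le> 1 + 2 * x / 3 + x\<^sup>2 / 6"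
    using x by (intro exp_mult_one_minus_third_le) auto
  also have "\<dots> = (1 + x + x\<^sup>2 / (2 * (1 - x / 3))) * (1 - x / 3)"
    using x by (simp add: field_simps power2_eq_square)
  finally have "exp x \<le> 1 + x + x\<^sup>2 / (2 * (1 - x / 3))"
    using x by simp
  also have "x\<^sup>2 / (2 * (1 - x / 3)) \<le> x\<^sup>2 / (2 * (1 - c / 3))"
    using assms x by (intro divide_left_mono) auto
  finally show ?thesis
    by simp
qed

lemma (in prob_space) bernstein_mgf_le:
  assumes [measurable]: "random_variable borel Y"
    and bounded: "AE x in M. \<bar>Y x\<bar> \<le> b" and "0 < b"
    and mean: "expectation Y = 0" and second_moment: "expectation (\<lambda>x. (Y x)\<^sup>2) \<le> s"
    and "0 < l" "l * b < 3"
  shows "(\<integral>\<^sup>+x. ennreal (exp (l * Y x)) \<partial>M) \<le> ennreal (exp (l\<^sup>2 * s / (2 * (1 - l * b / 3))))"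
proof -
  define c where "c = l * b"
  have c: "0 \<le> c" "c < 3"
    using assms by (auto simp: c_def)
  have int_Y: "integrable M Y"
    using bounded by (intro integrable_const_bound[where B = b]) auto
  have int_Y2: "integrable M (\<lambda>x. (Y x)\<^sup>2)"
    using bounded
    by (intro integrable_const_bound[where B = "b\<^sup>2"])
       (auto elim!: eventually_mono simp: power2_le_iff_abs_le)
  have int_exp: "integrable M (\<lambda>x. exp (l * Y x))"
    using bounded \<open>0 < l\<close>
    by (intro integrable_const_bound[where B = "exp (l * b)"]) (auto elim!: eventually_mono)
  have "expectation (\<lambda>x. exp (l * Y x))
        \<le> expectation (\<lambda>x. 1 + l * Y x + (l * Y x)\<^sup>2 / (2 * (1 - c / 3)))"
  proof (rule integral_mono_AE[OF int_exp])
    show "integrable M (\<lambda>x. 1 + l * Y x + (l * Y x)\<^sup>2 / (2 * (1 - c / 3)))"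
      using int_Y int_Y2 by (auto simp: power_mult_distrib)
    show "AE x in M. exp (l * Y x) \<le> 1 + l * Y x + (l * Y x)\<^sup>2 / (2 * (1 - c / 3))"
      using bounded
    proof eventually_elim
      case (elim x)
      then have "l * Y x \<le> c"
        unfolding c_def using \<open>0 < l\<close> by (intro mult_left_mono) auto
      then show ?case
        by (rule exp_le_bernstein[OF c])
    qed
  qed
  also have "\<dots> = 1 + l * expectation Y + l\<^sup>2 * expectation (\<lambda>x. (Y x)\<^sup>2) / (2 * (1 - c / 3))"
    using int_Y int_Y2 by (simp add: power_mult_distrib prob_space)
  also have "\<dots> \<le> 1 + l\<^sup>2 * s / (2 * (1 - c / 3))"
    using mean second_moment c by (auto intro!: divide_right_mono mult_left_mono)
  also have "\<dots> \<le> exp (l\<^sup>2 * s / (2 * (1 - c / 3)))"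
    by (rule exp_ge_add_one_self)
  finally show ?thesis
    unfolding c_def by (subst nn_integral_eq_integral[OF int_exp]) (auto intro: ennreal_leI)
qed

lemma chernoff_exponent_eq:
  fixes n s b \<epsilon> D :: real
  assumes "0 < n" "0 < s" "D = n * s + b * \<epsilon> / 3" "0 < D"
  shows "n * ((\<epsilon> / D)\<^sup>2 * s / (2 * (1 - \<epsilon> / D * b / 3))) - \<epsilon> / D * \<epsilon> = - (\<epsilon>\<^sup>2) / (2 * D)"
proof -
  have "1 - \<epsilon> / D * b / 3 = n * s / D"
    using \<open>0 < D\<close> unfolding \<open>D = n * s + b * \<epsilon> / 3\<close> by (simp add: field_simps)
  moreover have "n * ((\<epsilon> / D)\<^sup>2 * s / (2 * (n * s / D))) = (\<epsilon> / D)\<^sup>2 * D / 2"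
    using \<open>0 < n\<close> \<open>0 < s\<close> \<open>0 < D\<close> by (simp add: field_simps)
  ultimately have "n * ((\<epsilon> / D)\<^sup>2 * s / (2 * (1 - \<epsilon> / D * b / 3))) = (\<epsilon> / D)\<^sup>2 * D / 2"
    by simp
  then show ?thesis
    using \<open>0 < D\<close> by (simp add: field_simps power2_eq_square)
qed

text \<open>Chernoff's bound with the optimising parameter \<open>l = \<epsilon> / (n s + b \<epsilon> / 3)\<close>.\<close>

lemma (in prob_space) bernstein_upper_tail:
  assumes "finite I" "I \<noteq> {}" and indep: "indep_vars (\<lambda>_. borel) Y I"
    and bounded: "\<And>i. i \<in> I \<Longrightarrow> AE x in M. \<bar>Y i x\<bar> \<le> b" and "0 < b"
    and mean: "\<And>i. i \<in> I \<Longrightarrow> expectation (Y i) = 0"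
    and second_moment: "\<And>i. i \<in> I \<Longrightarrow> expectation (\<lambda>x. (Y i x)\<^sup>2) \<le> s"
    and "0 < s" "0 < \<epsilon>"
  shows "prob {x \<in> space M. \<epsilon> \<le> (\<Sum>i\<in>I. Y i x)}
           \<le> exp (- (\<epsilon>\<^sup>2) / (2 * (real (card I) * s + b * \<epsilon> / 3)))"
proof -
  define n where "n = real (card I)"
  have "0 < n"
    using assms by (simp add: n_def card_gt_0_iff)
  define D where "D = n * s + b * \<epsilon> / 3"
  have "0 < D"
    using \<open>0 < n\<close> assms by (simp add: D_def add_pos_pos)
  define l where "l = \<epsilon> / D"
  have "0 < l"
    using assms \<open>0 < D\<close> by (simp add: l_def)
  have "l * b < 3"
    using \<open>0 < n\<close> \<open>0 < s\<close> \<open>0 < D\<close> by (simp add: l_def D_def field_simps)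
  define K where "K = l\<^sup>2 * s / (2 * (1 - l * b / 3))"
  have [measurable]: "\<And>i. i \<in> I \<Longrightarrow> random_variable borel (Y i)"
    using indep unfolding indep_vars_def by blast
  have "ennreal (prob {x \<in> space M. \<epsilon> \<le> (\<Sum>i\<in>I. Y i x)})
        \<le> ennreal (exp (- l * \<epsilon>)) * (\<integral>\<^sup>+x\<in>space M. exp (l * (\<Sum>i\<in>I. Y i x)) \<partial>M)"
    unfolding emeasure_eq_measure[symmetric]
    by (intro Chernoff_ineq_nn_integral_ge \<open>0 < l\<close>) (auto intro!: borel_measurable_sum)
  also have "(\<integral>\<^sup>+x\<in>space M. exp (l * (\<Sum>i\<in>I. Y i x)) \<partial>M)
             = (\<integral>\<^sup>+x. (\<Prod>i\<in>I. ennreal (exp (l * Y i x))) \<partial>M)"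
    by (intro nn_integral_cong)
       (simp_all add: sum_distrib_left exp_sum \<open>finite I\<close> prod_ennreal)
  also have "\<dots> = (\<Prod>i\<in>I. \<integral>\<^sup>+x. ennreal (exp (l * Y i x)) \<partial>M)"
    by (intro indep_vars_nn_integral \<open>finite I\<close> indep_vars_compose2[OF indep]) auto
  also have "ennreal (exp (- l * \<epsilon>)) * \<dots> \<le> ennreal (exp (- l * \<epsilon>)) * (\<Prod>i\<in>I. ennreal (exp K))"
    unfolding K_def
    using bernstein_mgf_le bounded \<open>0 < b\<close> mean second_moment \<open>0 < l\<close> \<open>l * b < 3\<close>
    by (intro mult_left_mono prod_mono_ennreal) auto
  also have "ennreal (exp (- l * \<epsilon>)) * (\<Prod>i\<in>I. ennreal (exp K))
             = ennreal (exp (- l * \<epsilon>) * (\<Prod>i\<in>I. exp K))"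
    by (simp add: prod_ennreal ennreal_power flip: ennreal_mult)
  also have "exp (- l * \<epsilon>) * (\<Prod>i\<in>I. exp K) = exp (n * K - l * \<epsilon>)"
    by (simp add: exp_diff exp_minus exp_sum \<open>finite I\<close> n_def field_simps flip: exp_of_nat_mult)
  also have "n * K - l * \<epsilon> = - (\<epsilon>\<^sup>2) / (2 * D)"
    unfolding K_def l_def by (rule chernoff_exponent_eq[OF \<open>0 < n\<close> \<open>0 < s\<close> D_def \<open>0 < D\<close>])
  finally show ?thesis
    by (subst (asm) ennreal_le_iff) (simp_all add: D_def n_def)
qed

lemma bernstein_deviation_exponent:
  fixes n s b ell t :: real
  assumes "0 < n" "0 < s" "0 < b" "0 < ell"
    and t_def: "t = sqrt (2 * s * ell / n) + 2 * b * ell / (3 * n)"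
  shows "ell \<le> (n * t)\<^sup>2 / (2 * (n * s + b * (n * t) / 3))"
proof -
  define a where "a = sqrt (2 * s * ell / n)"
  define c where "c = 2 * b * ell / (3 * n)"
  have a: "0 \<le> a" "a\<^sup>2 = 2 * s * ell / n"
    using assms by (auto simp: a_def)
  have "0 \<le> c"
    using assms by (simp add: c_def)
  then have "a\<^sup>2 + c * t \<le> t\<^sup>2"
    unfolding t_def a_def[symmetric] c_def[symmetric]
    using a by (simp add: power2_eq_square algebra_simps)
  then have "n * (a\<^sup>2 + c * t) \<le> n * t\<^sup>2"
    using \<open>0 < n\<close> by (intro mult_left_mono) auto
  also have "n * (a\<^sup>2 + c * t) = 2 * ell * (s + b * t / 3)"
    using \<open>0 < n\<close> by (simp add: a c_def field_simps)
  finally have "2 * ell * (s + b * t / 3) \<le> n * t\<^sup>2" .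
  moreover have "0 < s + b * t / 3"
    using assms a \<open>0 \<le> c\<close> by (simp add: t_def a_def[symmetric] c_def[symmetric] add_pos_nonneg)
  ultimately have "ell \<le> n * t\<^sup>2 / (2 * (s + b * t / 3))"
    by (simp add: field_simps)
  also have "\<dots> = (n * (n * t\<^sup>2)) / (n * (2 * (s + b * t / 3)))"
    using \<open>0 < n\<close> by simp
  also have "\<dots> = (n * t)\<^sup>2 / (2 * (n * s + b * (n * t) / 3))"
    by (simp add: power2_eq_square algebra_simps)
  finally show ?thesis .
qed

lemma (in prob_space) bernstein_upper_deviation:
  assumes "finite I" "I \<noteq> {}" and indep: "indep_vars (\<lambda>_. borel) Y I"
    and bounded: "\<And>i. i \<in> I \<Longrightarrow> AE x in M. \<bar>Y i x\<bar> \<le> b" and "0 < b"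
    and mean: "\<And>i. i \<in> I \<Longrightarrow> expectation (Y i) = 0"
    and second_moment: "\<And>i. i \<in> I \<Longrightarrow> expectation (\<lambda>x. (Y i x)\<^sup>2) \<le> s"
    and "0 < s" "0 < ell"
  shows "prob {x \<in> space M. real (card I) * (sqrt (2 * s * ell / real (card I))
             + 2 * b * ell / (3 * real (card I))) \<le> (\<Sum>i\<in>I. Y i x)} \<le> exp (- ell)"
proof -
  define n where "n = real (card I)"
  define t where "t = sqrt (2 * s * ell / n) + 2 * b * ell / (3 * n)"
  have "0 < n"
    using assms by (simp add: n_def card_gt_0_iff)
  then have "0 < n * t"
    using assms unfolding t_def by (intro mult_pos_pos add_pos_pos) auto
  then have "prob {x \<in> space M. n * t \<le> (\<Sum>i\<in>I. Y i x)}
             \<le> exp (- ((n * t)\<^sup>2) / (2 * (n * s + b * (n * t) / 3)))"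
    unfolding n_def using assms by (intro bernstein_upper_tail) auto
  also have "\<dots> \<le> exp (- ell)"
    using bernstein_deviation_exponent[OF \<open>0 < n\<close> \<open>0 < s\<close> \<open>0 < b\<close> \<open>0 < ell\<close> t_def] by simp
  finally show ?thesis
    unfolding n_def t_def .
qed

lemma (in prob_space) bernstein_mean_deviation:
  assumes "finite I" "I \<noteq> {}" and indep: "indep_vars (\<lambda>_. borel) Y I"
    and bounded: "\<And>i. i \<in> I \<Longrightarrow> AE x in M. \<bar>Y i x\<bar> \<le> b" and "0 < b"
    and mean: "\<And>i. i \<in> I \<Longrightarrow> expectation (Y i) = 0"
    and second_moment: "\<And>i. i \<in> I \<Longrightarrow> expectation (\<lambda>x. (Y i x)\<^sup>2) \<le> s"
    and "0 < s" "0 < ell"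
  shows "prob {x \<in> space M. \<bar>(\<Sum>i\<in>I. Y i x) / real (card I)\<bar>
             \<le> sqrt (2 * s * ell / real (card I)) + 2 * b * ell / (3 * real (card I))}
           \<ge> 1 - 2 * exp (- ell)"
proof -
  define n where "n = real (card I)"
  define t where "t = sqrt (2 * s * ell / n) + 2 * b * ell / (3 * n)"
  have "0 < n"
    using assms by (simp add: n_def card_gt_0_iff)
  have [measurable]: "\<And>i. i \<in> I \<Longrightarrow> random_variable borel (Y i)"
    using indep unfolding indep_vars_def by blast
  define upper where "upper = {x \<in> space M. n * t \<le> (\<Sum>i\<in>I. Y i x)}"
  define lower where "lower = {x \<in> space M. n * t \<le> (\<Sum>i\<in>I. - Y i x)}"
  have events: "upper \<in> events" "lower \<in> events"
    unfolding upper_def lower_def by (auto intro!: borel_measurable_sum)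
  have "prob upper \<le> exp (- ell)"
    unfolding upper_def n_def t_def using assms by (intro bernstein_upper_deviation) auto
  moreover have "prob lower \<le> exp (- ell)"
    unfolding lower_def n_def t_def using assms indep_vars_compose2[OF indep, of "\<lambda>_. uminus"]
    by (intro bernstein_upper_deviation) auto
  moreover have "prob (upper \<union> lower) \<le> prob upper + prob lower"
    using events by (intro measure_Un_le) auto
  moreover have "prob (space M - (upper \<union> lower))
                 \<le> prob {x \<in> space M. \<bar>(\<Sum>i\<in>I. Y i x) / n\<bar> \<le> t}"
    unfolding upper_def lower_def using \<open>0 < n\<close>
    by (intro finite_measure_mono)
       (auto intro!: borel_measurable_sum simp: sum_negf abs_le_iff field_simps)
  ultimately show ?thesis
    using prob_compl[of "upper \<union> lower"] events unfolding n_def t_def by auto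
qed

lemma (in prob_space) bernstein_iid_mean_deviation:
  fixes V :: "nat \<Rightarrow> 'a \<Rightarrow> 'b" and Y :: "'b \<Rightarrow> real"
  assumes indep: "indep_vars (\<lambda>_. S) V {..<n}" and law: "\<And>i. i < n \<Longrightarrow> distr M S (V i) = \<mu>"
    and Y_meas[measurable]: "Y \<in> borel_measurable S"
    and bounded: "AE x in \<mu>. \<bar>Y x\<bar> \<le> b" and mean: "integral\<^sup>L \<mu> Y = 0"
    and second_moment: "(\<integral>x. (Y x)\<^sup>2 \<partial>\<mu>) \<le> s"
    and "0 < n" "0 < b" "0 < s" "0 < ell"
  shows "prob {\<omega> \<in> space M. \<bar>(\<Sum>i<n. Y (V i \<omega>)) / real n\<bar>
             \<le> sqrt (2 * s * ell / real n) + 2 * b * ell / (3 * real n)}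
           \<ge> 1 - 2 * exp (- ell)"
proof -
  have V_meas[measurable]: "V i \<in> measurable M S" if "i < n" for i
    using indep that unfolding indep_vars_def by auto
  have "prob {\<omega> \<in> space M. \<bar>(\<Sum>i\<in>{..<n}. Y (V i \<omega>)) / real (card {..<n})\<bar>
          \<le> sqrt (2 * s * ell / real (card {..<n})) + 2 * b * ell / (3 * real (card {..<n}))}
        \<ge> 1 - 2 * exp (- ell)"
  proof (rule bernstein_mean_deviation)
    show "indep_vars (\<lambda>_. borel) (\<lambda>i \<omega>. Y (V i \<omega>)) {..<n}"
      by (rule indep_vars_compose2[OF indep]) auto
    show "AE \<omega> in M. \<bar>Y (V i \<omega>)\<bar> \<le> b" if "i \<in> {..<n}" for i
    proof -
      have law_i: "distr M S (V i) = \<mu>"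
        using law that by simp
      show ?thesis
        using bounded[folded law_i] that by (subst (asm) AE_distr_iff) auto
    qed
    show "expectation (\<lambda>\<omega>. Y (V i \<omega>)) = 0" if "i \<in> {..<n}" for i
      using mean law[of i] that by (subst integral_distr[symmetric]) auto
    show "expectation (\<lambda>\<omega>. (Y (V i \<omega>))\<^sup>2) \<le> s" if "i \<in> {..<n}" for i
      using second_moment law[of i] that by (subst integral_distr[symmetric]) auto
  qed (use assms in auto)
  then show ?thesis
    by simp
qed

section \<open>Outer products, traces and symmetric matrices\<close>

lemma outer_nth [simp]: "outer u v $ i $ j = u $ i * v $ j"
  by (simp add: outer_def)

lemma trace_outer: "trace (outer u v) = u \<bullet> v"
  by (simp add: trace_def inner_vec_def)

lemma trace_matrix_mult: "trace ((A :: real^'k^'k) ** B) = (\<Sum>i\<in>UNIV. \<Sum>j\<in>UNIV. A $ i $ j * B $ j $ i)"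
  by (simp add: trace_def matrix_matrix_mult_def)

lemma inner_matrix_vector_mult:
  "(v :: real^'k) \<bullet> (A *v w) = (\<Sum>i\<in>UNIV. \<Sum>j\<in>UNIV. v $ i * A $ i $ j * w $ j)"
  by (simp add: inner_vec_def matrix_vector_mult_def sum_distrib_left mult.assoc)

lemma trace_outer_mult: "trace (outer u u ** A) = (u :: real^'k) \<bullet> (A *v u)"
  unfolding trace_matrix_mult inner_matrix_vector_mult
  by (rule trans[OF _ sum.swap]) (intro sum.cong refl, simp)

lemma outer_mult_vector: "outer u v *v w = ((v :: real^'k) \<bullet> w) *\<^sub>R (u :: real^'k)"
  unfolding vec_eq_iff matrix_vector_mult_def inner_vec_def
  by (auto simp: sum_distrib_right sum_distrib_left mult_ac intro!: sum.cong)

lemma inner_outer_mult_vector: "w \<bullet> (outer u u *v w) = ((u :: real^'k) \<bullet> w)\<^sup>2"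
  by (simp add: outer_mult_vector power2_eq_square inner_commute)

lemma trace_matrix_mult_diff:
  "trace ((A :: real^'k^'k) ** (B - C)) = trace (A ** B) - trace (A ** C)"
  by (simp add: trace_matrix_mult sum_subtractf right_diff_distrib)

lemma bounded_linear_trace: "bounded_linear (trace :: real^'k^'k \<Rightarrow> real)"
  unfolding linear_linear
  by (rule linearI) (simp_all add: trace_def sum.distrib sum_distrib_left)

lemma bounded_linear_trace_mult_left: "bounded_linear (\<lambda>Y :: real^'k^'k. trace (Y ** A))"
  unfolding linear_linear
  by (rule linearI) (simp_all add: trace_matrix_mult sum.distrib sum_distrib_left algebra_simps)

lemma bounded_linear_trace_mult_right: "bounded_linear (\<lambda>Y :: real^'k^'k. trace (A ** Y))"
  unfolding linear_linear
  by (rule linearI) (simp_all add: trace_matrix_mult sum.distrib sum_distrib_left algebra_simps)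

lemma bounded_linear_inner_matrix_vector: "bounded_linear (\<lambda>Y :: real^'k^'k. v \<bullet> (Y *v w))"
  unfolding linear_linear
  by (rule linearI) (simp_all add: inner_matrix_vector_mult sum.distrib sum_distrib_left algebra_simps)

lemma bounded_linear_matrix_nth: "bounded_linear (\<lambda>Y :: real^'k^'k. Y $ i $ j)"
  unfolding linear_linear by (rule linearI) simp_all

lemma continuous_on_outer [continuous_intros]:
  "continuous_on S f \<Longrightarrow> continuous_on S g \<Longrightarrow> continuous_on S (\<lambda>x. outer (f x :: real^'k) (g x))"
  unfolding outer_def by (intro continuous_intros)

lemma continuous_on_matrix_mult [continuous_intros]:
  "continuous_on S f \<Longrightarrow> continuous_on S g \<Longrightarrow> continuous_on S (\<lambda>x. (f x :: real^'k^'k) ** g x)"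
  unfolding matrix_matrix_mult_def by (intro continuous_intros)

lemma continuous_on_matrix_vector_mult [continuous_intros]:
  "continuous_on S f \<Longrightarrow> continuous_on S g \<Longrightarrow> continuous_on S (\<lambda>x. (f x :: real^'k^'k) *v g x)"
  unfolding matrix_vector_mult_def by (intro continuous_intros)

lemma continuous_on_trace [continuous_intros]:
  "continuous_on S f \<Longrightarrow> continuous_on S (\<lambda>x. trace (f x :: real^'k^'k))"
  unfolding trace_def by (intro continuous_intros)

lemma borel_measurable_outer [measurable (raw)]:
  fixes F G :: "'a \<Rightarrow> real^'k"
  assumes "F \<in> borel_measurable M" "G \<in> borel_measurable M"
  shows "(\<lambda>x. outer (F x) (G x)) \<in> borel_measurable M"
  using borel_measurable_continuous_on[where f = "\<lambda>p. outer (fst p) (snd p)",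
      OF _ borel_measurable_Pair[OF assms]]
  by (simp add: continuous_intros)

lemma borel_measurable_matrix_mult [measurable (raw)]:
  fixes F G :: "'a \<Rightarrow> real^'k^'k"
  assumes "F \<in> borel_measurable M" "G \<in> borel_measurable M"
  shows "(\<lambda>x. F x ** G x) \<in> borel_measurable M"
  using borel_measurable_continuous_on[where f = "\<lambda>p. fst p ** snd p",
      OF _ borel_measurable_Pair[OF assms]]
  by (simp add: continuous_intros)

lemma borel_measurable_trace [measurable (raw)]:
  fixes F :: "'a \<Rightarrow> real^'k^'k"
  assumes "F \<in> borel_measurable M"
  shows "(\<lambda>x. trace (F x)) \<in> borel_measurable M"
  using borel_measurable_continuous_on[where f = trace, OF _ assms]
  by (simp add: continuous_on_trace[of UNIV "\<lambda>x. x", simplified])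

lemma inner_symmetric_square_mult:
  assumes "transpose C = C"
  shows "y \<bullet> (((C :: real^'k^'k) ** C) *v x) = (C *v y) \<bullet> (C *v x)"
proof -
  have "y \<bullet> ((C ** C) *v x) = (y v* C) \<bullet> (C *v x)"
    by (simp add: matrix_vector_mul_assoc dot_lmul_matrix)
  also have "y v* C = C *v y"
    by (metis assms transpose_matrix_vector)
  finally show ?thesis .
qed

lemma quadratic_form_symmetric_square_nonneg:
  "transpose C = C \<Longrightarrow> 0 \<le> v \<bullet> (((C :: real^'k^'k) ** C) *v v)"
  by (simp add: inner_symmetric_square_mult)

lemma quadratic_form_squared_le:
  assumes "transpose C = C"
  shows "(v \<bullet> ((C :: real^'k^'k) *v v))\<^sup>2 \<le> (norm v)\<^sup>2 * (v \<bullet> ((C ** C) *v v))"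
proof -
  have "\<bar>v \<bullet> (C *v v)\<bar> \<le> norm v * norm (C *v v)"
    by (rule Cauchy_Schwarz_ineq2)
  then have "(v \<bullet> (C *v v))\<^sup>2 \<le> (norm v * norm (C *v v))\<^sup>2"
    by (simp add: power2_le_iff_abs_le)
  then show ?thesis
    by (simp add: inner_symmetric_square_mult[OF assms] power2_norm_eq_inner power_mult_distrib)
qed

lemma symmetric_matrix_nth: "transpose C = C \<Longrightarrow> C $ j $ i = C $ i $ j"
  by (metis transpose_def vec_lambda_beta)

lemma trace_symmetric_square:
  "transpose C = C \<Longrightarrow> trace ((C :: real^'k^'k) ** C) = (norm C)\<^sup>2"
  unfolding trace_matrix_mult
  by (simp add: power2_norm_eq_inner inner_vec_def symmetric_matrix_nth)

lemma norm_matrix_vector_mult_le: "norm ((C :: real^'k^'k) *v v) \<le> norm C * norm v"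
proof -
  have norm_sq: "(norm w)\<^sup>2 = (\<Sum>i\<in>UNIV. (norm (w $ i))\<^sup>2)"
    for w :: "'a::real_normed_vector^'k"
    by (simp add: norm_vec_def L2_set_def sum_nonneg)
  have row: "(C *v v) $ i = C $ i \<bullet> v" for i
    by (simp add: matrix_vector_mult_def inner_vec_def)
  have "(norm (C *v v))\<^sup>2 = (\<Sum>i\<in>UNIV. (C $ i \<bullet> v)\<^sup>2)"
    by (simp add: norm_sq[of "C *v v"] row)
  also have "\<dots> \<le> (\<Sum>i\<in>UNIV. (norm (C $ i))\<^sup>2 * (norm v)\<^sup>2)"
  proof (intro sum_mono)
    fix i
    have "\<bar>C $ i \<bullet> v\<bar> \<le> norm (C $ i) * norm v"
      by (rule Cauchy_Schwarz_ineq2)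
    then have "(C $ i \<bullet> v)\<^sup>2 \<le> (norm (C $ i) * norm v)\<^sup>2"
      using power2_le_iff_abs_le[of "norm (C $ i) * norm v" "C $ i \<bullet> v"] by simp
    then show "(C $ i \<bullet> v)\<^sup>2 \<le> (norm (C $ i))\<^sup>2 * (norm v)\<^sup>2"
      by (simp add: power_mult_distrib)
  qed
  also have "\<dots> = (norm C * norm v)\<^sup>2"
    by (simp add: power_mult_distrib sum_distrib_right[symmetric] norm_sq[of C])
  finally show ?thesis
    using power2_le_imp_le by (metis mult_nonneg_nonneg norm_ge_zero)
qed

lemma inner_symmetric_square_le:
  assumes "transpose C = C"
  shows "y \<bullet> (((C :: real^'k^'k) ** C) *v x) \<le> (norm C)\<^sup>2 * (norm y * norm x)"
proof -
  have "y \<bullet> ((C ** C) *v x) = (C *v y) \<bullet> (C *v x)"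
    by (rule inner_symmetric_square_mult[OF assms])
  also have "\<dots> \<le> norm (C *v y) * norm (C *v x)"
    by (rule norm_cauchy_schwarz)
  also have "\<dots> \<le> (norm C * norm y) * (norm C * norm x)"
    by (intro mult_mono norm_matrix_vector_mult_le) auto
  finally show ?thesis
    by (simp add: power2_eq_square mult_ac)
qed

lemma opnorm_nonneg: "0 \<le> opnorm (V :: real^'k^'k)"
  unfolding opnorm_def by (rule onorm_pos_le[OF matrix_vector_mul_bounded_linear])

lemma opnorm_pos:
  assumes "(V :: real^'k^'k) \<noteq> 0"
  shows "0 < opnorm V"
proof -
  have "opnorm V \<noteq> 0"
  proof
    assume "opnorm V = 0"
    then have "\<forall>x. V *v x = 0"
      unfolding opnorm_def onorm_eq_0[OF matrix_vector_mul_bounded_linear] .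
    then show False
      using assms by (simp add: matrix_eq)
  qed
  then show ?thesis
    using opnorm_nonneg[of V] by simp
qed

lemma quadratic_form_le_opnorm: "(v :: real^'k) \<bullet> (V *v v) \<le> opnorm V * (norm v)\<^sup>2"
proof -
  have "v \<bullet> (V *v v) \<le> norm v * norm (V *v v)"
    by (rule norm_cauchy_schwarz)
  also have "\<dots> \<le> norm v * (opnorm V * norm v)"
    unfolding opnorm_def by (intro mult_left_mono onorm[OF matrix_vector_mul_bounded_linear]) auto
  finally show ?thesis
    by (simp add: power2_eq_square mult_ac)
qed

section \<open>Features bounded in norm\<close>

lemma integrable_continuous_compose_compact:
  fixes F :: "'a \<Rightarrow> 'b::topological_space" and h :: "'b \<Rightarrow> 'c::{banach,second_countable_topology}"
  assumes "finite_measure M" "continuous_on UNIV h" "F \<in> borel_measurable M"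
    and "AE x in M. F x \<in> K" "compact K"
  shows "integrable M (\<lambda>x. h (F x))"
proof -
  have "compact (h ` K)"
    using assms by (intro compact_continuous_image) (auto intro: continuous_on_subset)
  then obtain B where "\<And>y. y \<in> h ` K \<Longrightarrow> norm y \<le> B"
    using compact_imp_bounded bounded_iff by metis
  then show ?thesis
    using assms borel_measurable_continuous_on
    by (intro finite_measure.integrable_const_bound[where B = B]) (auto elim!: eventually_mono)
qed

lemma (in prob_space) abs_integral_le_const:
  fixes h :: "'a \<Rightarrow> real"
  assumes "integrable M h" "AE x in M. \<bar>h x\<bar> \<le> c"
  shows "\<bar>integral\<^sup>L M h\<bar> \<le> c"
proof -
  have "AE x in M. h x \<le> c" "AE x in M. - c \<le> h x"
    using assms(2) by (auto elim!: eventually_mono)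
  then have "integral\<^sup>L M h \<le> c" "- c \<le> integral\<^sup>L M h"
    using integral_le_const[OF assms(1)] integral_ge_const[OF assms(1)] by blast+
  then show ?thesis
    by linarith
qed

lemma (in prob_space) square_expectation_le:
  fixes X :: "'a \<Rightarrow> real"
  assumes "integrable M X" "integrable M (\<lambda>x. (X x)\<^sup>2)"
  shows "(expectation X)\<^sup>2 \<le> expectation (\<lambda>x. (X x)\<^sup>2)"
  using variance_eq[OF assms] integral_nonneg_AE[of "\<lambda>x. (X x - expectation X)\<^sup>2" M] by simp

lemma abs_inner_le_square:
  fixes u v :: "'a::real_inner"
  assumes "norm u \<le> R" "norm v \<le> R"
  shows "\<bar>u \<bullet> v\<bar> \<le> R\<^sup>2"
proof -
  have "0 \<le> R"
    using assms(1) norm_ge_zero order_trans by blast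
  have "\<bar>u \<bullet> v\<bar> \<le> norm u * norm v"
    by (rule Cauchy_Schwarz_ineq2)
  also have "\<dots> \<le> R * R"
    using assms \<open>0 \<le> R\<close> by (intro mult_mono) auto
  finally show ?thesis
    by (simp add: power2_eq_square)
qed

lemma inner_square_le:
  fixes u v :: "'a::real_inner"
  assumes "norm u \<le> R" "norm v \<le> R"
  shows "(u \<bullet> v)\<^sup>2 \<le> R\<^sup>2 * R\<^sup>2"
proof -
  have "\<bar>u \<bullet> v\<bar> * \<bar>u \<bullet> v\<bar> \<le> R\<^sup>2 * R\<^sup>2"
    using abs_inner_le_square[OF assms] by (intro mult_mono) auto
  then show ?thesis
    by (simp add: power2_eq_square)
qed

locale bounded_feature =
  fixes \<mu> :: "(real^'d) measure" and b :: "real^'d \<Rightarrow> real^'k" and R :: real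
  assumes prob_space: "prob_space \<mu>"
    and measurable_feature [measurable]: "b \<in> borel_measurable \<mu>"
    and bounded: "AE x in \<mu>. norm (b x) \<le> R"
    and R_pos: "0 < R"
begin

lemma integrable_continuous:
  fixes h :: "real^'k \<Rightarrow> 'c::{banach,second_countable_topology}"
  assumes "continuous_on UNIV h"
  shows "integrable \<mu> (\<lambda>x. h (b x))"
  using prob_space bounded assms
  by (intro integrable_continuous_compose_compact[where K = "cball 0 R"])
     (auto simp: prob_space_def)

lemma integrable_outer: "integrable \<mu> (\<lambda>x. outer (b x) (b x))"
  by (rule integrable_continuous) (intro continuous_intros)

lemma trace_sec_mom_mult: "trace (sec_mom \<mu> b ** X) = (\<integral>x. b x \<bullet> (X *v b x) \<partial>\<mu>)"
  unfolding sec_mom_def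
  using integral_bounded_linear[OF bounded_linear_trace_mult_left integrable_outer, of X]
  by (simp add: trace_outer_mult)

lemma quadratic_form_sec_mom: "v \<bullet> (sec_mom \<mu> b *v v) = (\<integral>x. (b x \<bullet> v)\<^sup>2 \<partial>\<mu>)"
  unfolding sec_mom_def
  using integral_bounded_linear[OF bounded_linear_inner_matrix_vector integrable_outer, of v v]
  by (simp add: inner_outer_mult_vector)

lemma symmetric_sec_mom: "transpose (sec_mom \<mu> b) = sec_mom \<mu> b"
proof -
  have "sec_mom \<mu> b $ i $ j = (\<integral>x. b x $ i * b x $ j \<partial>\<mu>)" for i j
    unfolding sec_mom_def
    using integral_bounded_linear[OF bounded_linear_matrix_nth integrable_outer, of i j] by simp
  then show ?thesis
    by (simp add: transpose_def vec_eq_iff mult.commute)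
qed

lemma quadratic_form_sec_mom_bounds:
  assumes "norm v \<le> R"
  shows "0 \<le> v \<bullet> (sec_mom \<mu> b *v v)" "v \<bullet> (sec_mom \<mu> b *v v) \<le> R\<^sup>2 * R\<^sup>2"
proof -
  interpret prob_space \<mu> by (rule prob_space)
  have "integrable \<mu> (\<lambda>x. (b x \<bullet> v)\<^sup>2)"
    by (rule integrable_continuous) (intro continuous_intros)
  moreover have "AE x in \<mu>. (b x \<bullet> v)\<^sup>2 \<le> R\<^sup>2 * R\<^sup>2"
    using bounded by eventually_elim (use assms inner_square_le in blast)
  ultimately show "v \<bullet> (sec_mom \<mu> b *v v) \<le> R\<^sup>2 * R\<^sup>2"
    unfolding quadratic_form_sec_mom by (rule integral_le_const)
  show "0 \<le> v \<bullet> (sec_mom \<mu> b *v v)"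
    unfolding quadratic_form_sec_mom by simp
qed

definition centered_outer :: "real^'d \<Rightarrow> real^'k^'k" where
  "centered_outer x = outer (b x) (b x) - sec_mom \<mu> b"

lemma var_mat_eq: "var_mat \<mu> b = (\<integral>x. centered_outer x ** centered_outer x \<partial>\<mu>)"
  unfolding var_mat_def centered_outer_def ..

lemma symmetric_centered_outer: "transpose (centered_outer x) = centered_outer x"
  unfolding centered_outer_def
  by (simp add: transpose_def vec_eq_iff symmetric_matrix_nth[OF symmetric_sec_mom] mult.commute)

lemma integrable_centered_outer_square: "integrable \<mu> (\<lambda>x. centered_outer x ** centered_outer x)"
  unfolding centered_outer_def by (rule integrable_continuous) (intro continuous_intros)

text \<open>For \<open>V = E[C\<^sup>2]\<close> with \<open>C\<close> symmetric, \<open>\<langle>y, V x\<rangle> = E \<langle>C y, C x\<rangle> \<le> E \<parallel>C\<parallel>\<^sup>2 \<parallel>y\<parallel> \<parallel>x\<parallel>\<close>,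
  and \<open>E \<parallel>C\<parallel>\<^sup>2 = tr V\<close>, the Frobenius norm bounding the operator norm.\<close>

lemma opnorm_var_mat_le_trace: "opnorm (var_mat \<mu> b) \<le> trace (var_mat \<mu> b)"
proof -
  define V where "V = var_mat \<mu> b"
  define C where "C = centered_outer"
  have trace_V: "trace V = (\<integral>x. (norm (C x))\<^sup>2 \<partial>\<mu>)"
    unfolding V_def C_def var_mat_eq
    using integral_bounded_linear[OF bounded_linear_trace integrable_centered_outer_square]
    by (simp add: trace_symmetric_square[OF symmetric_centered_outer])
  have "norm (V *v x) \<le> trace V * norm x" for x
  proof -
    define y where "y = V *v x"
    have "(norm y)\<^sup>2 = (\<integral>z. y \<bullet> ((C z ** C z) *v x) \<partial>\<mu>)"
      unfolding y_def V_def C_def var_mat_eq power2_norm_eq_inner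
      by (rule integral_bounded_linear[OF bounded_linear_inner_matrix_vector
            integrable_centered_outer_square, symmetric])
    also have "\<dots> \<le> (\<integral>z. (norm (C z))\<^sup>2 * (norm y * norm x) \<partial>\<mu>)"
    proof (rule integral_mono)
      show "integrable \<mu> (\<lambda>z. y \<bullet> ((C z ** C z) *v x))"
        "integrable \<mu> (\<lambda>z. (norm (C z))\<^sup>2 * (norm y * norm x))"
        unfolding C_def centered_outer_def by (rule integrable_continuous, intro continuous_intros)+
      show "y \<bullet> ((C z ** C z) *v x) \<le> (norm (C z))\<^sup>2 * (norm y * norm x)" for z
        unfolding C_def by (rule inner_symmetric_square_le[OF symmetric_centered_outer])
    qed
    also have "\<dots> = trace V * norm y * norm x"
      unfolding trace_V by simp
    finally have "(norm y)\<^sup>2 \<le> trace V * norm x * norm y"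
      by (simp add: mult_ac)
    moreover have "0 \<le> trace V"
      unfolding trace_V by simp
    ultimately show ?thesis
      unfolding y_def[symmetric] by (cases "norm y = 0") (auto simp: power2_eq_square)
  qed
  then show ?thesis
    unfolding V_def opnorm_def by (rule onorm_le)
qed

lemma intdim_var_mat_ge_one:
  assumes "var_mat \<mu> b \<noteq> 0"
  shows "1 \<le> intdim (var_mat \<mu> b)"
  using opnorm_pos[OF assms] opnorm_var_mat_le_trace unfolding intdim_def by simp

end

section \<open>Concentration of the three terms\<close>

lemma sqrt_square_mult: "0 \<le> c \<Longrightarrow> sqrt (c\<^sup>2 * x) = c * sqrt x"
  by (simp add: real_sqrt_mult)

lemma trace_emp_cross: "trace (emp_cross f g zs n) = (\<Sum>t<n. f (fst (zs t)) \<bullet> g (snd (zs t))) / real n"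
proof -
  interpret bounded_linear "trace :: real^'k^'k \<Rightarrow> real"
    by (rule bounded_linear_trace)
  show ?thesis
    unfolding emp_cross_def scaleR sum by (simp add: trace_outer)
qed

lemma trace_mult_emp_mom:
  "trace ((X :: real^'k^'k) ** emp_mom f xs n) = (\<Sum>i<n. trace (X ** outer (f (xs i)) (f (xs i)))) / real n"
proof -
  interpret bounded_linear "\<lambda>Y :: real^'k^'k. trace (X ** Y)"
    by (rule bounded_linear_trace_mult_right)
  show ?thesis
    unfolding emp_mom_def scaleR sum by simp
qed

lemma (in prob_space) centered_moments_of_bounded:
  fixes h :: "'a \<Rightarrow> real"
  assumes [measurable]: "h \<in> borel_measurable M" and bounded: "AE x in M. \<bar>h x\<bar> \<le> B"
  shows "AE x in M. \<bar>h x - expectation h\<bar> \<le> 2 * B"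
    and "expectation (\<lambda>x. h x - expectation h) = 0"
    and "expectation (\<lambda>x. (h x - expectation h)\<^sup>2) \<le> B\<^sup>2"
proof -
  have int_h: "integrable M h"
    using bounded by (intro integrable_const_bound[where B = B]) auto
  have int_h2: "integrable M (\<lambda>x. (h x)\<^sup>2)"
    using bounded by (intro integrable_const_bound[where B = "B\<^sup>2"])
      (auto elim!: eventually_mono simp: power2_le_iff_abs_le)
  have "\<bar>expectation h\<bar> \<le> B"
    by (rule abs_integral_le_const[OF int_h bounded])
  then show "AE x in M. \<bar>h x - expectation h\<bar> \<le> 2 * B"
    using bounded by (auto elim!: eventually_mono)
  show "expectation (\<lambda>x. h x - expectation h) = 0"
    using int_h by (simp add: prob_space)
  have "expectation (\<lambda>x. (h x)\<^sup>2) \<le> B\<^sup>2"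
    using bounded
    by (intro integral_le_const[OF int_h2]) (auto elim!: eventually_mono simp: power2_le_iff_abs_le)
  then show "expectation (\<lambda>x. (h x - expectation h)\<^sup>2) \<le> B\<^sup>2"
    using variance_eq[OF int_h int_h2] zero_le_power2[of "expectation h"] by linarith
qed

lemma trace_cross_mom_eq_integral:
  fixes J :: "((real^'d) \<times> (real^'d)) measure" and f g :: "real^'d \<Rightarrow> real^'k"
  assumes "finite_measure J" and J_sets: "sets J = sets (borel \<Otimes>\<^sub>M borel)"
    and [measurable]: "f \<in> borel_measurable borel" "g \<in> borel_measurable borel"
    and "AE z in J. norm (f (fst z)) \<le> R" "AE z in J. norm (g (snd z)) \<le> R"
  shows "trace (cross_mom J f g) = (\<integral>z. f (fst z) \<bullet> g (snd z) \<partial>J)"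
proof -
  have fg_meas: "(\<lambda>z. (f (fst z), g (snd z))) \<in> borel_measurable J"
    by (simp add: measurable_cong_sets[OF J_sets])
  have fg_bounded: "AE z in J. (f (fst z), g (snd z)) \<in> cball 0 R \<times> cball 0 R"
    using assms(5,6) by eventually_elim auto
  have "integrable J (\<lambda>z. outer (f (fst z)) (g (snd z)))"
    using integrable_continuous_compose_compact[OF \<open>finite_measure J\<close> _ fg_meas fg_bounded,
        where h = "\<lambda>p. outer (fst p) (snd p)"]
    by (simp add: continuous_intros compact_Times)
  then have "trace (cross_mom J f g) = (\<integral>z. trace (outer (f (fst z)) (g (snd z))) \<partial>J)"
    unfolding cross_mom_def by (rule integral_bounded_linear[OF bounded_linear_trace, symmetric])
  then show ?thesis
    by (simp add: trace_outer)
qed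

lemma trace_emp_cross_concentration:
  fixes J :: "((real^'d) \<times> (real^'d)) measure" and f g :: "real^'d \<Rightarrow> real^'k"
    and Z :: "nat \<Rightarrow> 'w \<Rightarrow> (real^'d) \<times> (real^'d)"
  assumes "prob_space M" "prob_space J" and J_sets: "sets J = sets (borel \<Otimes>\<^sub>M borel)"
    and [measurable]: "f \<in> borel_measurable borel" "g \<in> borel_measurable borel"
    and f_bounded: "AE z in J. norm (f (fst z)) \<le> R" and g_bounded: "AE z in J. norm (g (snd z)) \<le> R"
    and "0 < R" "0 < n" "0 < ell"
    and indep: "prob_space.indep_vars M (\<lambda>_. borel \<Otimes>\<^sub>M borel) Z {..<n}"
    and law: "\<And>t. t < n \<Longrightarrow> distr M (borel \<Otimes>\<^sub>M borel) (Z t) = J"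
  shows "measure M {\<omega> \<in> space M. \<bar>trace (emp_cross f g (\<lambda>t. Z t \<omega>) n) - trace (cross_mom J f g)\<bar>
             \<le> R\<^sup>2 * (sqrt (2 * ell / real n) + 4 * ell / (3 * real n))}
           \<ge> 1 - 2 * exp (- ell)"
proof -
  interpret M: prob_space M by fact
  interpret J: prob_space J by fact
  define h where "h z = f (fst z) \<bullet> g (snd z)" for z
  have h_meas: "h \<in> borel_measurable (borel \<Otimes>\<^sub>M borel)"
    unfolding h_def by measurable
  have trace_cross_mom: "trace (cross_mom J f g) = J.expectation h"
    unfolding h_def[abs_def]
    by (rule trace_cross_mom_eq_integral[OF J.finite_measure_axioms J_sets _ _ f_bounded g_bounded]) simp_all
  have h_bounded: "AE z in J. \<bar>h z\<bar> \<le> R\<^sup>2"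
    using f_bounded g_bounded by eventually_elim (simp add: h_def abs_inner_le_square)
  have "M.prob {\<omega> \<in> space M. \<bar>(\<Sum>t<n. h (Z t \<omega>) - J.expectation h) / real n\<bar>
          \<le> sqrt (2 * (R\<^sup>2)\<^sup>2 * ell / real n) + 2 * (2 * R\<^sup>2) * ell / (3 * real n)}
        \<ge> 1 - 2 * exp (- ell)"
    using J.centered_moments_of_bounded[OF _ h_bounded] h_meas assms
    by (intro M.bernstein_iid_mean_deviation[OF indep law]) auto
  moreover have "sqrt (2 * (R\<^sup>2)\<^sup>2 * ell / real n) = R\<^sup>2 * sqrt (2 * ell / real n)"
    using sqrt_square_mult[of "R\<^sup>2" "2 * ell / real n"] by (simp add: mult_ac)
  ultimately show ?thesis
    unfolding trace_cross_mom trace_emp_cross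
    using \<open>0 < n\<close> by (simp add: sum_subtractf h_def diff_divide_distrib algebra_simps)
qed

locale bounded_feature_pair = nu: bounded_feature \<nu> a R + mu: bounded_feature \<mu> b R
  for \<nu> :: "(real^'d) measure" and a :: "real^'d \<Rightarrow> real^'k"
    and \<mu> :: "(real^'e) measure" and b :: "real^'e \<Rightarrow> real^'k" and R :: real
begin

definition fluctuation :: "real^'e \<Rightarrow> real" where
  "fluctuation x = trace (sec_mom \<nu> a ** outer (b x) (b x)) - trace (sec_mom \<nu> a ** sec_mom \<mu> b)"

lemma fluctuation_eq_integral: "fluctuation x = (\<integral>y. a y \<bullet> (mu.centered_outer x *v a y) \<partial>\<nu>)"
  unfolding fluctuation_def mu.centered_outer_def trace_matrix_mult_diff[symmetric]
  by (rule nu.trace_sec_mom_mult)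

lemma integrable_quadratic_form: "integrable \<nu> (\<lambda>y. a y \<bullet> (C *v a y))"
  by (rule nu.integrable_continuous) (intro continuous_intros)

lemma fluctuation_mean: "integral\<^sup>L \<mu> fluctuation = 0"
proof -
  interpret prob_space \<mu> by (rule mu.prob_space)
  have "integral\<^sup>L \<mu> (\<lambda>x. trace (sec_mom \<nu> a ** outer (b x) (b x))) = trace (sec_mom \<nu> a ** sec_mom \<mu> b)"
    unfolding sec_mom_def[of \<mu>]
    by (rule integral_bounded_linear[OF bounded_linear_trace_mult_right mu.integrable_outer])
  moreover have "integrable \<mu> (\<lambda>x. trace (sec_mom \<nu> a ** outer (b x) (b x)))"
    by (rule mu.integrable_continuous) (intro continuous_intros)
  ultimately show ?thesis
    unfolding fluctuation_def by (simp add: prob_space)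
qed

lemma fluctuation_bounded: "AE x in \<mu>. \<bar>fluctuation x\<bar> \<le> R\<^sup>2 * R\<^sup>2"
  using mu.bounded
proof eventually_elim
  case (elim x)
  have "\<bar>v \<bullet> (mu.centered_outer x *v v)\<bar> \<le> R\<^sup>2 * R\<^sup>2" if "norm v \<le> R" for v
  proof -
    have "v \<bullet> (mu.centered_outer x *v v) = (b x \<bullet> v)\<^sup>2 - v \<bullet> (sec_mom \<mu> b *v v)"
      unfolding mu.centered_outer_def
      by (simp add: matrix_vector_mult_diff_rdistrib inner_diff_right inner_outer_mult_vector)
    then show ?thesis
      using inner_square_le[OF elim that] mu.quadratic_form_sec_mom_bounds[OF that]
        zero_le_power2[of "b x \<bullet> v"]
      unfolding abs_le_iff by linarith
  qed
  then show ?case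
    unfolding fluctuation_eq_integral
    using nu.bounded
    by (intro prob_space.abs_integral_le_const[OF nu.prob_space integrable_quadratic_form])
       (auto elim!: eventually_mono)
qed

text \<open>Jensen and \<open>\<langle>v, C v\<rangle>\<^sup>2 \<le> \<parallel>v\<parallel>\<^sup>2 \<langle>v, C\<^sup>2 v\<rangle>\<close> give a bound linear in \<open>C\<^sup>2\<close>, whose mean is
  \<open>R\<^sup>2 tr (M\<^sub>\<nu> V) \<le> R\<^sup>4 \<parallel>V\<parallel>\<^sub>o\<^sub>p\<close>.\<close>

lemma fluctuation_square_le: "(fluctuation x)\<^sup>2 \<le> R\<^sup>2 * trace (sec_mom \<nu> a ** (mu.centered_outer x ** mu.centered_outer x))"
proof -
  define C where "C = mu.centered_outer x"
  have "(fluctuation x)\<^sup>2 \<le> (\<integral>y. (a y \<bullet> (C *v a y))\<^sup>2 \<partial>\<nu>)"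
    unfolding fluctuation_eq_integral C_def
    by (intro prob_space.square_expectation_le[OF nu.prob_space integrable_quadratic_form]
        nu.integrable_continuous) (intro continuous_intros)
  also have "\<dots> \<le> (\<integral>y. R\<^sup>2 * (a y \<bullet> ((C ** C) *v a y)) \<partial>\<nu>)"
  proof (rule integral_mono_AE)
    show "integrable \<nu> (\<lambda>y. (a y \<bullet> (C *v a y))\<^sup>2)" "integrable \<nu> (\<lambda>y. R\<^sup>2 * (a y \<bullet> ((C ** C) *v a y)))"
      by (rule nu.integrable_continuous, intro continuous_intros)+
    show "AE y in \<nu>. (a y \<bullet> (C *v a y))\<^sup>2 \<le> R\<^sup>2 * (a y \<bullet> ((C ** C) *v a y))"
      using nu.bounded
    proof eventually_elim
      case (elim y)
      have sym: "transpose C = C"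
        unfolding C_def by (rule mu.symmetric_centered_outer)
      have "(a y \<bullet> (C *v a y))\<^sup>2 \<le> (norm (a y))\<^sup>2 * (a y \<bullet> ((C ** C) *v a y))"
        by (rule quadratic_form_squared_le[OF sym])
      also have "\<dots> \<le> R\<^sup>2 * (a y \<bullet> ((C ** C) *v a y))"
        using elim by (intro mult_right_mono quadratic_form_symmetric_square_nonneg[OF sym] power_mono) auto
      finally show ?case .
    qed
  qed
  also have "\<dots> = R\<^sup>2 * trace (sec_mom \<nu> a ** (C ** C))"
    by (simp add: nu.trace_sec_mom_mult)
  finally show ?thesis
    unfolding C_def .
qed

lemma fluctuation_second_moment: "(\<integral>x. (fluctuation x)\<^sup>2 \<partial>\<mu>) \<le> R\<^sup>2 * R\<^sup>2 * opnorm (var_mat \<mu> b)"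
proof -
  define V where "V = var_mat \<mu> b"
  have "(\<integral>x. (fluctuation x)\<^sup>2 \<partial>\<mu>)
        \<le> (\<integral>x. R\<^sup>2 * trace (sec_mom \<nu> a ** (mu.centered_outer x ** mu.centered_outer x)) \<partial>\<mu>)"
    unfolding fluctuation_def mu.centered_outer_def
    by (intro integral_mono fluctuation_square_le[unfolded fluctuation_def mu.centered_outer_def]
        mu.integrable_continuous; intro continuous_intros)
  also have "\<dots> = R\<^sup>2 * trace (sec_mom \<nu> a ** V)"
    unfolding V_def mu.var_mat_eq
    using integral_bounded_linear[OF bounded_linear_trace_mult_right mu.integrable_centered_outer_square]
    by simp
  also have "trace (sec_mom \<nu> a ** V) \<le> opnorm V * R\<^sup>2"
    unfolding nu.trace_sec_mom_mult
  proof (rule prob_space.integral_le_const[OF nu.prob_space integrable_quadratic_form])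
    show "AE y in \<nu>. a y \<bullet> (V *v a y) \<le> opnorm V * R\<^sup>2"
      using nu.bounded
    proof eventually_elim
      case (elim y)
      have "a y \<bullet> (V *v a y) \<le> opnorm V * (norm (a y))\<^sup>2"
        by (rule quadratic_form_le_opnorm)
      also have "\<dots> \<le> opnorm V * R\<^sup>2"
        using elim by (intro mult_left_mono opnorm_nonneg power_mono) auto
      finally show ?case .
    qed
  qed
  finally show ?thesis
    using mu.R_pos by (simp add: V_def mult_left_mono algebra_simps)
qed

lemma trace_emp_mom_concentration:
  fixes V :: "nat \<Rightarrow> 'w \<Rightarrow> real^'e"
  assumes "prob_space M" and \<mu>_sets: "sets \<mu> = sets borel" and "var_mat \<mu> b \<noteq> 0"
    and "0 < n" "0 < ell"
    and indep: "prob_space.indep_vars M (\<lambda>_. borel) V {..<n}"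
    and law: "\<And>i. i < n \<Longrightarrow> distr M borel (V i) = \<mu>"
  shows "measure M {\<omega> \<in> space M.
             \<bar>trace (sec_mom \<nu> a ** emp_mom b (\<lambda>i. V i \<omega>) n) - trace (sec_mom \<nu> a ** sec_mom \<mu> b)\<bar>
             \<le> R\<^sup>2 * (sqrt (2 * opnorm (var_mat \<mu> b) * ell / real n) + 2 * R\<^sup>2 * ell / (3 * real n))}
           \<ge> 1 - 2 * exp (- ell)"
proof -
  interpret M: prob_space M by fact
  have "fluctuation \<in> borel_measurable \<mu>"
    unfolding fluctuation_def by measurable
  then have "fluctuation \<in> borel_measurable borel"
    by (simp add: measurable_cong_sets[OF \<mu>_sets])
  moreover have "0 < R\<^sup>2 * R\<^sup>2 * opnorm (var_mat \<mu> b)"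
    using mu.R_pos opnorm_pos[OF \<open>var_mat \<mu> b \<noteq> 0\<close>] by simp
  ultimately have "M.prob {\<omega> \<in> space M. \<bar>(\<Sum>i<n. fluctuation (V i \<omega>)) / real n\<bar>
          \<le> sqrt (2 * ((R\<^sup>2)\<^sup>2 * opnorm (var_mat \<mu> b)) * ell / real n)
             + 2 * (R\<^sup>2 * R\<^sup>2) * ell / (3 * real n)}
        \<ge> 1 - 2 * exp (- ell)"
    using fluctuation_bounded fluctuation_mean fluctuation_second_moment mu.R_pos assms
    by (intro M.bernstein_iid_mean_deviation[OF indep law]) (auto simp: power2_eq_square)
  moreover have "sqrt (2 * ((R\<^sup>2)\<^sup>2 * opnorm (var_mat \<mu> b)) * ell / real n)
                 = R\<^sup>2 * sqrt (2 * opnorm (var_mat \<mu> b) * ell / real n)"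
    using sqrt_square_mult[of "R\<^sup>2" "2 * opnorm (var_mat \<mu> b) * ell / real n"] by (simp add: mult_ac)
  ultimately show ?thesis
    unfolding trace_mult_emp_mom
    using \<open>0 < n\<close> by (simp add: fluctuation_def sum_subtractf diff_divide_distrib algebra_simps)
qed

end

lemma emp_mom_eq_sec_mom_pmf:
  assumes "0 < n"
  shows "emp_mom g w n = sec_mom (measure_pmf (map_pmf w (pmf_of_set {..<n}))) g"
proof -
  have set_pmf: "set_pmf (pmf_of_set {..<n}) = {..<n}"
    using assms by (intro set_pmf_of_set) auto
  have "sec_mom (measure_pmf (map_pmf w (pmf_of_set {..<n}))) g
        = (\<integral>i. outer (g (w i)) (g (w i)) \<partial>measure_pmf (pmf_of_set {..<n}))"
    unfolding sec_mom_def by simp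
  also have "\<dots> = (\<Sum>i<n. pmf (pmf_of_set {..<n}) i *\<^sub>R outer (g (w i)) (g (w i)))"
    by (rule integral_measure_pmf[of "{..<n}"]) (auto simp: set_pmf)
  also have "\<dots> = (\<Sum>i<n. (1 / real n) *\<^sub>R outer (g (w i)) (g (w i)))"
    using assms by (intro sum.cong refl, subst pmf_of_set) auto
  also have "\<dots> = emp_mom g w n"
    unfolding emp_mom_def by (simp add: scaleR_sum_right)
  finally show ?thesis ..
qed

lemma bounded_feature_empirical:
  fixes n :: nat
  assumes "0 < n" "0 < R" "\<forall>j<n. norm (g (w j)) \<le> R"
  shows "bounded_feature (measure_pmf (map_pmf w (pmf_of_set {..<n}))) g R"
proof
  have "set_pmf (pmf_of_set {..<n}) = {..<n}"
    using assms by (intro set_pmf_of_set) auto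
  then have "set_pmf (map_pmf w (pmf_of_set {..<n})) = w ` {..<n}"
    by simp
  then show "AE x in measure_pmf (map_pmf w (pmf_of_set {..<n})). norm (g x) \<le> R"
    using assms by (intro AE_pmfI) auto
qed (use assms prob_space_measure_pmf in auto)

text \<open>Fubini over the joint law of \<open>(X, Y)\<close>, which independence makes a product measure.\<close>

lemma (in prob_space) prob_indep_pair_ge:
  assumes indep: "indep_var S X T Y" and A: "A \<in> sets (S \<Otimes>\<^sub>M T)"
    and section_bound: "\<And>y. y \<in> space T \<Longrightarrow> prob {\<omega> \<in> space M. (X \<omega>, y) \<in> A} \<ge> 1 - d"
  shows "prob {\<omega> \<in> space M. (X \<omega>, Y \<omega>) \<in> A} \<ge> 1 - d"
proof (cases "d \<le> 1")
  case False
  then show ?thesis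
    by (meson measure_nonneg order_trans linorder_not_le diff_le_0_iff_le less_imp_le)
next
  case True
  have [measurable]: "X \<in> measurable M S" "Y \<in> measurable M T"
    using indep by (auto dest: indep_var_rv1 indep_var_rv2)
  define DX where "DX = distr M S X"
  define DY where "DY = distr M T Y"
  interpret DX: prob_space DX
    unfolding DX_def by (rule prob_space_distr) simp
  interpret DY: prob_space DY
    unfolding DY_def by (rule prob_space_distr) simp
  interpret pair_sigma_finite DX DY ..
  have joint: "distr M (S \<Otimes>\<^sub>M T) (\<lambda>\<omega>. (X \<omega>, Y \<omega>)) = DX \<Otimes>\<^sub>M DY"
    using indep unfolding indep_var_distribution_eq DX_def DY_def by simp
  have "emeasure M {\<omega> \<in> space M. (X \<omega>, Y \<omega>) \<in> A} = emeasure (DX \<Otimes>\<^sub>M DY) A"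
    using A by (subst joint[symmetric], subst emeasure_distr) (auto intro!: arg_cong[where f = "emeasure M"])
  also have "\<dots> = (\<integral>\<^sup>+y. emeasure DX ((\<lambda>x. (x, y)) -` A) \<partial>DY)"
    using A sets_pair_measure_cong[of DX S DY T]
    by (intro emeasure_pair_measure_alt2) (simp add: DX_def DY_def)
  also have "\<dots> \<ge> (\<integral>\<^sup>+y. ennreal (1 - d) \<partial>DY)"
  proof (rule nn_integral_mono)
    fix y
    assume "y \<in> space DY"
    then have y: "y \<in> space T"
      by (simp add: DY_def)
    have "emeasure DX ((\<lambda>x. (x, y)) -` A) = emeasure M {\<omega> \<in> space M. (X \<omega>, y) \<in> A}"
      unfolding DX_def using sets_Pair2[OF A] by (subst emeasure_distr) (auto intro!: arg_cong[where f = "emeasure M"])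
    then show "ennreal (1 - d) \<le> emeasure DX ((\<lambda>x. (x, y)) -` A)"
      using section_bound[OF y] by (simp add: emeasure_eq_measure ennreal_leI)
  qed
  finally show ?thesis
    using True by (simp add: emeasure_eq_measure DY.emeasure_space_1 ennreal_le_iff)
qed

lemma emp_mom_restrict: "emp_mom f (restrict xs {..<n}) n = emp_mom f xs n"
  unfolding emp_mom_def by (intro arg_cong[where f = "\<lambda>S. _ *\<^sub>R S"] sum.cong) auto

lemma emp_mom_product_section_concentration:
  fixes U :: "nat \<Rightarrow> 'w \<Rightarrow> real^'d" and w :: "nat \<Rightarrow> real^'e"
  assumes "prob_space M" and f: "bounded_feature \<rho>0 f R"
    and "sets \<rho>0 = sets borel" "var_mat \<rho>0 f \<noteq> 0" and "0 < N0" "0 < N1" "0 < ell"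
    and "prob_space.indep_vars M (\<lambda>_. borel) U {..<N0}"
    and "\<And>i. i < N0 \<Longrightarrow> distr M borel (U i) = \<rho>0"
  shows "measure M {\<omega> \<in> space M. (\<forall>j<N1. norm (g (w j)) \<le> R) \<longrightarrow>
             \<bar>trace (emp_mom f (\<lambda>i. U i \<omega>) N0 ** emp_mom g w N1) - trace (sec_mom \<rho>0 f ** emp_mom g w N1)\<bar>
             \<le> R\<^sup>2 * (sqrt (2 * opnorm (var_mat \<rho>0 f) * ell / real N0) + 2 * R\<^sup>2 * ell / (3 * real N0))}
           \<ge> 1 - 2 * exp (- ell)"
proof (cases "\<forall>j<N1. norm (g (w j)) \<le> R")
  case True
  interpret bounded_feature_pair "measure_pmf (map_pmf w (pmf_of_set {..<N1}))" g \<rho>0 f R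
    using bounded_feature_empirical[of N1 R g w, OF \<open>0 < N1\<close> bounded_feature.R_pos[OF f] True] f
    by (rule bounded_feature_pair.intro)
  show ?thesis
    using trace_emp_mom_concentration[OF assms(1,3-5,7-9)] True
    by (simp add: emp_mom_eq_sec_mom_pmf[OF \<open>0 < N1\<close>, symmetric] trace_mul_sym[of "emp_mom g w N1"])
next
  case False
  then have "{\<omega> \<in> space M. (\<forall>j<N1. norm (g (w j)) \<le> R) \<longrightarrow> P \<omega>} = space M" for P
    by auto
  then show ?thesis
    using prob_space.prob_space[OF \<open>prob_space M\<close>] by simp
qed

text \<open>The event is checked on the product of the sample spaces of \<open>U\<close> and \<open>W\<close>; sections at
  samples \<open>w\<close> with \<open>g (w j)\<close> out of the ball of radius \<open>R\<close> are trivial, and such samples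
  have probability zero.\<close>

lemma trace_emp_mom_product_concentration:
  fixes U W :: "nat \<Rightarrow> 'w \<Rightarrow> real^'d"
  assumes "prob_space M" and f: "bounded_feature \<rho>0 f R"
    and \<rho>0_sets: "sets \<rho>0 = sets borel" and "var_mat \<rho>0 f \<noteq> 0"
    and [measurable]: "g \<in> borel_measurable borel"
    and "0 < N0" "0 < N1" "0 < ell"
    and U_indep: "prob_space.indep_vars M (\<lambda>_. borel) U {..<N0}"
    and U_law: "\<And>i. i < N0 \<Longrightarrow> distr M borel (U i) = \<rho>0"
    and W_meas: "\<And>j. j < N1 \<Longrightarrow> W j \<in> borel_measurable M"
    and W_bounded: "\<And>j. j < N1 \<Longrightarrow> AE \<omega> in M. norm (g (W j \<omega>)) \<le> R"
    and UW_indep: "prob_space.indep_var M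
        (Pi\<^sub>M {..<N0} (\<lambda>_. borel)) (\<lambda>\<omega>. \<lambda>i\<in>{..<N0}. U i \<omega>)
        (Pi\<^sub>M {..<N1} (\<lambda>_. borel)) (\<lambda>\<omega>. \<lambda>j\<in>{..<N1}. W j \<omega>)"
  shows "measure M {\<omega> \<in> space M.
             \<bar>trace (emp_mom f (\<lambda>i. U i \<omega>) N0 ** emp_mom g (\<lambda>j. W j \<omega>) N1)
              - trace (sec_mom \<rho>0 f ** emp_mom g (\<lambda>j. W j \<omega>) N1)\<bar>
             \<le> R\<^sup>2 * (sqrt (2 * opnorm (var_mat \<rho>0 f) * ell / real N0) + 2 * R\<^sup>2 * ell / (3 * real N0))}
           \<ge> 1 - 2 * exp (- ell)"
    (is "measure M {\<omega> \<in> space M. ?dev (\<lambda>i. U i \<omega>) (\<lambda>j. W j \<omega>)} \<ge> _")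
proof -
  interpret M: prob_space M by fact
  have [measurable]: "f \<in> borel_measurable borel"
    using bounded_feature.measurable_feature[OF f] by (simp add: measurable_cong_sets[OF \<rho>0_sets])
  have [measurable]: "U i \<in> borel_measurable M" if "i \<in> {..<N0}" for i
    using U_indep that unfolding M.indep_vars_def by auto
  have [measurable]: "W j \<in> borel_measurable M" if "j \<in> {..<N1}" for j
    using W_meas that by auto
  define A where "A = {uw \<in> space (Pi\<^sub>M {..<N0} (\<lambda>_. borel) \<Otimes>\<^sub>M Pi\<^sub>M {..<N1} (\<lambda>_. borel)).
      (\<forall>j\<in>{..<N1}. norm (g (snd uw j)) \<le> R) \<longrightarrow> ?dev (fst uw) (snd uw)}"
  have A_sets [measurable]: "A \<in> sets (Pi\<^sub>M {..<N0} (\<lambda>_. borel) \<Otimes>\<^sub>M Pi\<^sub>M {..<N1} (\<lambda>_. borel))"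
    unfolding A_def emp_mom_def by measurable
  have W_all_bounded: "AE \<omega> in M. \<forall>j\<in>{..<N1}. norm (g (W j \<omega>)) \<le> R"
    using W_bounded by (subst AE_finite_all) auto
  have "M.prob {\<omega> \<in> space M. ((\<lambda>i\<in>{..<N0}. U i \<omega>), (\<lambda>j\<in>{..<N1}. W j \<omega>)) \<in> A} \<ge> 1 - 2 * exp (- ell)"
  proof (rule M.prob_indep_pair_ge[OF UW_indep A_sets])
    fix w
    assume w: "w \<in> space (Pi\<^sub>M {..<N1} (\<lambda>_. borel :: (real^'d) measure))"
    have "{\<omega> \<in> space M. ((\<lambda>i\<in>{..<N0}. U i \<omega>), w) \<in> A}
          = {\<omega> \<in> space M. (\<forall>j<N1. norm (g (w j)) \<le> R) \<longrightarrow> ?dev (\<lambda>i. U i \<omega>) w}"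
      using w unfolding A_def by (auto simp: emp_mom_restrict space_pair_measure space_PiM)
    then show "M.prob {\<omega> \<in> space M. ((\<lambda>i\<in>{..<N0}. U i \<omega>), w) \<in> A} \<ge> 1 - 2 * exp (- ell)"
      using emp_mom_product_section_concentration[where g = g and w = w, OF assms(1-4,6-8) U_indep U_law]
      by simp
  qed
  moreover have "AE \<omega> in M. \<omega> \<in> {\<omega> \<in> space M. ((\<lambda>i\<in>{..<N0}. U i \<omega>), (\<lambda>j\<in>{..<N1}. W j \<omega>)) \<in> A}
                   \<longrightarrow> \<omega> \<in> {\<omega> \<in> space M. ?dev (\<lambda>i. U i \<omega>) (\<lambda>j. W j \<omega>)}"
    using W_all_bounded unfolding A_def by eventually_elim (auto simp: emp_mom_restrict)
  then have "M.prob {\<omega> \<in> space M. ((\<lambda>i\<in>{..<N0}. U i \<omega>), (\<lambda>j\<in>{..<N1}. W j \<omega>)) \<in> A}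
             \<le> M.prob {\<omega> \<in> space M. ?dev (\<lambda>i. U i \<omega>) (\<lambda>j. W j \<omega>)}"
    by (rule M.finite_measure_mono_AE) (unfold emp_mom_def, measurable)
  ultimately show ?thesis
    by linarith
qed

section \<open>Deviation of the empirical LoRA objective\<close>

lemma (in prob_space) prob_Int_ge:
  assumes "A \<in> events" "B \<in> events"
  shows "prob (A \<inter> B) \<ge> prob A + prob B - 1"
proof -
  have "prob A \<le> prob ((A \<inter> B) \<union> (space M - B))"
    using assms sets.sets_into_space by (intro finite_measure_mono) auto
  also have "\<dots> \<le> prob (A \<inter> B) + prob (space M - B)"
    using assms by (intro measure_Un_le) auto
  also have "prob (space M - B) = 1 - prob B"
    using assms by (intro prob_compl)
  finally show ?thesis
    by simp
qed

lemma (in prob_space) prob_conj3_ge: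
  assumes "prob {x \<in> space M. P x} \<ge> 1 - a" "prob {x \<in> space M. Q x} \<ge> 1 - b"
    and "prob {x \<in> space M. S x} \<ge> 1 - c" and "\<And>x. P x \<Longrightarrow> Q x \<Longrightarrow> S x \<Longrightarrow> T x"
    and [measurable]: "Measurable.pred M P" "Measurable.pred M Q" "Measurable.pred M S" "Measurable.pred M T"
  shows "prob {x \<in> space M. T x} \<ge> 1 - (a + b + c)"
proof -
  have events: "{x \<in> space M. P x} \<in> events" "{x \<in> space M. Q x} \<in> events" "{x \<in> space M. S x} \<in> events"
    by measurable
  have conj_eq: "{x \<in> space M. P x \<and> Q x \<and> S x}
                 = {x \<in> space M. P x} \<inter> {x \<in> space M. Q x} \<inter> {x \<in> space M. S x}"
    by auto
  have "1 - (a + b + c) \<le> prob {x \<in> space M. P x \<and> Q x \<and> S x}"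
    unfolding conj_eq
    using prob_Int_ge[OF events(1,2)] prob_Int_ge[OF sets.Int[OF events(1,2)] events(3)] assms(1-3)
    by linarith
  also have "\<dots> \<le> prob {x \<in> space M. T x}"
    using assms(4) by (intro finite_measure_mono) auto
  finally show ?thesis .
qed

lemma abs_emp_lora_diff_le:
  assumes "\<bar>trace (emp_cross f g zs N) - trace (cross_mom J f g)\<bar> \<le> t1"
    and "\<bar>trace (emp_mom f xs N0 ** emp_mom g ys N1) - trace (sec_mom \<rho>0 f ** emp_mom g ys N1)\<bar> \<le> t2"
    and "\<bar>trace (sec_mom \<rho>0 f ** emp_mom g ys N1) - trace (sec_mom \<rho>0 f ** sec_mom \<rho>1 g)\<bar> \<le> t3"
  shows "\<bar>emp_lora f g zs N xs N0 ys N1 - lora J \<rho>0 \<rho>1 f g\<bar> \<le> 2 * t1 + t2 + t3"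
proof -
  have "\<bar>(- 2 * a + b) - (- 2 * c + e)\<bar> \<le> 2 * t1 + t2 + t3"
    if "\<bar>a - c\<bar> \<le> t1" "\<bar>b - d\<bar> \<le> t2" "\<bar>d - e\<bar> \<le> t3" for a b c d e :: real
    using that by (simp add: abs_le_iff)
  then show ?thesis
    unfolding emp_lora_def lora_def using assms .
qed

lemma lora_bound_le_intdim_bound:
  fixes R \<delta> vf vg rf rg :: real and N N0 N1 :: nat
  assumes "0 < N" "0 < N0" "0 < N1" "0 < \<delta>" "\<delta> < 1" "0 \<le> vf" "0 \<le> vg" "1 \<le> rf" "1 \<le> rg"
  defines "ell \<equiv> ln (6 / \<delta>)"
  shows "2 * (R\<^sup>2 * (sqrt (2 * ell / real N) + 4 * ell / (3 * real N)))
        + R\<^sup>2 * (sqrt (2 * vf * ell / real N0) + 2 * R\<^sup>2 * ell / (3 * real N0))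
        + R\<^sup>2 * (sqrt (2 * vg * ell / real N1) + 2 * R\<^sup>2 * ell / (3 * real N1))
      \<le> R\<^sup>2 * (sqrt (16 / real N * ln (6 / \<delta>)) + 8 / (3 * real N) * ln (6 / \<delta>)
          + sqrt (2 * vf / real N0 * ln (12 * rf / \<delta>)) + 2 * R\<^sup>2 / (3 * real N0) * ln (12 * rf / \<delta>)
          + sqrt (2 * vg / real N1 * ln (12 * rg / \<delta>)) + 2 * R\<^sup>2 / (3 * real N1) * ln (12 * rg / \<delta>))"
proof -
  have "0 < ell"
    using assms by simp
  have sample_term:
    "sqrt (2 * v * ell / real n) + 2 * R\<^sup>2 * ell / (3 * real n)
     \<le> sqrt (2 * v / real n * ln (12 * r / \<delta>)) + 2 * R\<^sup>2 / (3 * real n) * ln (12 * r / \<delta>)"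
    if "0 < n" "0 \<le> v" "1 \<le> r" for v r :: real and n :: nat
  proof -
    have "ell \<le> ln (12 * r / \<delta>)"
      unfolding ell_def using assms that by (intro ln_mono) (auto simp: divide_right_mono)
    then show ?thesis
      using that \<open>0 < ell\<close>
      by (intro add_mono real_sqrt_le_mono)
         (auto simp: mult_left_mono divide_right_mono mult_right_mono)
  qed
  have "2 * sqrt (2 * ell / real N) = sqrt (8 * ell / real N)"
    using sqrt_square_mult[of 2 "2 * ell / real N"] by simp
  also have "\<dots> \<le> sqrt (16 / real N * ell)"
    using \<open>0 < ell\<close> by (intro real_sqrt_le_mono) (simp add: divide_right_mono)
  finally have "2 * (sqrt (2 * ell / real N) + 4 * ell / (3 * real N))
                \<le> sqrt (16 / real N * ln (6 / \<delta>)) + 8 / (3 * real N) * ln (6 / \<delta>)"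
    by (simp add: ell_def)
  then have "R\<^sup>2 * (2 * (sqrt (2 * ell / real N) + 4 * ell / (3 * real N)))
        + R\<^sup>2 * (sqrt (2 * vf * ell / real N0) + 2 * R\<^sup>2 * ell / (3 * real N0))
        + R\<^sup>2 * (sqrt (2 * vg * ell / real N1) + 2 * R\<^sup>2 * ell / (3 * real N1))
      \<le> R\<^sup>2 * (sqrt (16 / real N * ln (6 / \<delta>)) + 8 / (3 * real N) * ln (6 / \<delta>))
        + R\<^sup>2 * (sqrt (2 * vf / real N0 * ln (12 * rf / \<delta>)) + 2 * R\<^sup>2 / (3 * real N0) * ln (12 * rf / \<delta>))
        + R\<^sup>2 * (sqrt (2 * vg / real N1 * ln (12 * rg / \<delta>)) + 2 * R\<^sup>2 / (3 * real N1) * ln (12 * rg / \<delta>))"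
    by (intro add_mono mult_left_mono sample_term assms) auto
  then show ?thesis
    by (simp add: distrib_left add.assoc mult.left_commute)
qed

locale lora_sampling =
  fixes M :: "'w measure" and J :: "((real^'d) \<times> (real^'d)) measure"
    and \<rho>0 \<rho>1 :: "(real^'d) measure" and f g :: "real^'d \<Rightarrow> real^'k" and R :: real
    and N N0 N1 :: nat and Z :: "nat \<Rightarrow> 'w \<Rightarrow> (real^'d) \<times> (real^'d)"
    and U W :: "nat \<Rightarrow> 'w \<Rightarrow> real^'d"
  assumes M_prob: "prob_space M" and J_prob: "prob_space J"
    and J_sets: "sets J = sets (borel \<Otimes>\<^sub>M borel)"
    and f: "bounded_feature \<rho>0 f R" and g: "bounded_feature \<rho>1 g R"
    and \<rho>0_sets: "sets \<rho>0 = sets borel" and \<rho>1_sets: "sets \<rho>1 = sets borel"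
    and f_J: "AE z in J. norm (f (fst z)) \<le> R" and g_J: "AE z in J. norm (g (snd z)) \<le> R"
    and V_f: "var_mat \<rho>0 f \<noteq> 0" and V_g: "var_mat \<rho>1 g \<noteq> 0"
    and N_pos: "0 < N" and N0_pos: "0 < N0" and N1_pos: "0 < N1"
    and Z_indep: "prob_space.indep_vars M (\<lambda>_. borel \<Otimes>\<^sub>M borel) Z {..<N}"
    and Z_law: "\<And>t. t < N \<Longrightarrow> distr M (borel \<Otimes>\<^sub>M borel) (Z t) = J"
    and U_indep: "prob_space.indep_vars M (\<lambda>_. borel) U {..<N0}"
    and U_law: "\<And>i. i < N0 \<Longrightarrow> distr M borel (U i) = \<rho>0"
    and W_indep: "prob_space.indep_vars M (\<lambda>_. borel) W {..<N1}"
    and W_law: "\<And>j. j < N1 \<Longrightarrow> distr M borel (W j) = \<rho>1"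
    and UW_indep: "prob_space.indep_var M
        (Pi\<^sub>M {..<N0} (\<lambda>_. borel)) (\<lambda>\<omega>. \<lambda>i\<in>{..<N0}. U i \<omega>)
        (Pi\<^sub>M {..<N1} (\<lambda>_. borel)) (\<lambda>\<omega>. \<lambda>j\<in>{..<N1}. W j \<omega>)"
begin

sublocale M: prob_space M
  by (rule M_prob)

sublocale fg: bounded_feature_pair \<rho>0 f \<rho>1 g R
  using f g by (rule bounded_feature_pair.intro)

lemma f_measurable [measurable]: "f \<in> borel_measurable borel"
  using fg.nu.measurable_feature by (simp add: measurable_cong_sets[OF \<rho>0_sets])

lemma g_measurable [measurable]: "g \<in> borel_measurable borel"
  using fg.mu.measurable_feature by (simp add: measurable_cong_sets[OF \<rho>1_sets])

lemma Z_measurable [measurable]: "t \<in> {..<N} \<Longrightarrow> Z t \<in> measurable M (borel \<Otimes>\<^sub>M borel)"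
  using Z_indep unfolding M.indep_vars_def by auto

lemma U_measurable [measurable]: "i \<in> {..<N0} \<Longrightarrow> U i \<in> borel_measurable M"
  using U_indep unfolding M.indep_vars_def by auto

lemma W_measurable [measurable]: "j \<in> {..<N1} \<Longrightarrow> W j \<in> borel_measurable M"
  using W_indep unfolding M.indep_vars_def by auto

lemma W_bounded:
  assumes "j < N1"
  shows "AE \<omega> in M. norm (g (W j \<omega>)) \<le> R"
  using fg.mu.bounded[folded W_law[OF assms]] W_measurable[of j] assms
  by (subst (asm) AE_distr_iff) auto

theorem deviation_bound:
  assumes ell_pos: "0 < ell"
    and bound: "2 * (R\<^sup>2 * (sqrt (2 * ell / real N) + 4 * ell / (3 * real N)))
        + R\<^sup>2 * (sqrt (2 * opnorm (var_mat \<rho>0 f) * ell / real N0) + 2 * R\<^sup>2 * ell / (3 * real N0))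
        + R\<^sup>2 * (sqrt (2 * opnorm (var_mat \<rho>1 g) * ell / real N1) + 2 * R\<^sup>2 * ell / (3 * real N1))
        \<le> c"
  shows "measure M {\<omega> \<in> space M.
      \<bar>emp_lora f g (\<lambda>t. Z t \<omega>) N (\<lambda>i. U i \<omega>) N0 (\<lambda>j. W j \<omega>) N1 - lora J \<rho>0 \<rho>1 f g\<bar> \<le> c}
    \<ge> 1 - 6 * exp (- ell)"
proof -
  have cross: "M.prob {\<omega> \<in> space M. \<bar>trace (emp_cross f g (\<lambda>t. Z t \<omega>) N) - trace (cross_mom J f g)\<bar>
      \<le> R\<^sup>2 * (sqrt (2 * ell / real N) + 4 * ell / (3 * real N))} \<ge> 1 - 2 * exp (- ell)"
    by (rule trace_emp_cross_concentration[OF M_prob J_prob J_sets f_measurable g_measurable f_J g_J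
          fg.nu.R_pos N_pos ell_pos Z_indep Z_law])
  have product: "M.prob {\<omega> \<in> space M.
      \<bar>trace (emp_mom f (\<lambda>i. U i \<omega>) N0 ** emp_mom g (\<lambda>j. W j \<omega>) N1)
       - trace (sec_mom \<rho>0 f ** emp_mom g (\<lambda>j. W j \<omega>) N1)\<bar>
      \<le> R\<^sup>2 * (sqrt (2 * opnorm (var_mat \<rho>0 f) * ell / real N0) + 2 * R\<^sup>2 * ell / (3 * real N0))}
    \<ge> 1 - 2 * exp (- ell)"
    using W_measurable
    by (intro trace_emp_mom_product_concentration[OF M_prob f \<rho>0_sets V_f g_measurable N0_pos N1_pos
          ell_pos U_indep U_law _ W_bounded UW_indep]) auto
  have moment: "M.prob {\<omega> \<in> space M.
      \<bar>trace (sec_mom \<rho>0 f ** emp_mom g (\<lambda>j. W j \<omega>) N1) - trace (sec_mom \<rho>0 f ** sec_mom \<rho>1 g)\<bar>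
      \<le> R\<^sup>2 * (sqrt (2 * opnorm (var_mat \<rho>1 g) * ell / real N1) + 2 * R\<^sup>2 * ell / (3 * real N1))}
    \<ge> 1 - 2 * exp (- ell)"
    by (rule fg.trace_emp_mom_concentration[OF M_prob \<rho>1_sets V_g N1_pos ell_pos W_indep W_law])
  have "M.prob {\<omega> \<in> space M.
      \<bar>emp_lora f g (\<lambda>t. Z t \<omega>) N (\<lambda>i. U i \<omega>) N0 (\<lambda>j. W j \<omega>) N1 - lora J \<rho>0 \<rho>1 f g\<bar> \<le> c}
    \<ge> 1 - (2 * exp (- ell) + 2 * exp (- ell) + 2 * exp (- ell))"
    by (rule M.prob_conj3_ge[OF cross product moment order_trans[OF abs_emp_lora_diff_le bound]])
       (unfold emp_lora_def emp_cross_def emp_mom_def, measurable)+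
  then show ?thesis
    by simp
qed

corollary deviation_bound_confidence:
  assumes "0 < \<delta>" "\<delta> < 1"
  shows "measure M {\<omega> \<in> space M.
      \<bar>emp_lora f g (\<lambda>t. Z t \<omega>) N (\<lambda>i. U i \<omega>) N0 (\<lambda>j. W j \<omega>) N1 - lora J \<rho>0 \<rho>1 f g\<bar>
      \<le> R\<^sup>2 * (sqrt (16 / real N * ln (6 / \<delta>)) + 8 / (3 * real N) * ln (6 / \<delta>)
          + sqrt (2 * opnorm (var_mat \<rho>0 f) / real N0 * ln (12 * intdim (var_mat \<rho>0 f) / \<delta>))
          + 2 * R\<^sup>2 / (3 * real N0) * ln (12 * intdim (var_mat \<rho>0 f) / \<delta>)
          + sqrt (2 * opnorm (var_mat \<rho>1 g) / real N1 * ln (12 * intdim (var_mat \<rho>1 g) / \<delta>))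
          + 2 * R\<^sup>2 / (3 * real N1) * ln (12 * intdim (var_mat \<rho>1 g) / \<delta>))}
    \<ge> 1 - \<delta>"
proof -
  have "6 * exp (- ln (6 / \<delta>)) = \<delta>"
    using assms by (simp add: exp_minus)
  moreover have "measure M {\<omega> \<in> space M.
      \<bar>emp_lora f g (\<lambda>t. Z t \<omega>) N (\<lambda>i. U i \<omega>) N0 (\<lambda>j. W j \<omega>) N1 - lora J \<rho>0 \<rho>1 f g\<bar>
      \<le> R\<^sup>2 * (sqrt (16 / real N * ln (6 / \<delta>)) + 8 / (3 * real N) * ln (6 / \<delta>)
          + sqrt (2 * opnorm (var_mat \<rho>0 f) / real N0 * ln (12 * intdim (var_mat \<rho>0 f) / \<delta>))
          + 2 * R\<^sup>2 / (3 * real N0) * ln (12 * intdim (var_mat \<rho>0 f) / \<delta>)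
          + sqrt (2 * opnorm (var_mat \<rho>1 g) / real N1 * ln (12 * intdim (var_mat \<rho>1 g) / \<delta>))
          + 2 * R\<^sup>2 / (3 * real N1) * ln (12 * intdim (var_mat \<rho>1 g) / \<delta>))}
    \<ge> 1 - 6 * exp (- ln (6 / \<delta>))"
    using assms N_pos N0_pos N1_pos
    by (intro deviation_bound lora_bound_le_intdim_bound opnorm_nonneg fg.nu.intdim_var_mat_ge_one[OF V_f]
        fg.mu.intdim_var_mat_ge_one[OF V_g]) auto
  ultimately show ?thesis
    by simp
qed

end

lemma AE_markov_joint_fst:
  assumes "prob_space \<rho>0" and \<rho>0_sets: "sets \<rho>0 = sets borel" and "X \<in> sets lborel"
    and [measurable]: "(\<lambda>(x, x'). p x x') \<in> borel_measurable (borel \<Otimes>\<^sub>M borel)"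
    and [measurable]: "Measurable.pred borel P" and "AE x in \<rho>0. P x"
  shows "AE z in markov_joint \<rho>0 p X. P (fst z)"
proof -
  interpret \<rho>0: prob_space \<rho>0 by fact
  interpret pair_sigma_finite \<rho>0 lborel ..
  have sets_eq: "sets (\<rho>0 \<Otimes>\<^sub>M lborel) = sets (borel \<Otimes>\<^sub>M borel)"
    by (intro sets_pair_measure_cong \<rho>0_sets) simp
  have "(\<lambda>(x, x'). ennreal (indicator X x' * p x x')) \<in> borel_measurable (borel \<Otimes>\<^sub>M borel)"
    using \<open>X \<in> sets lborel\<close> by measurable
  then have density_meas: "(\<lambda>(x, x'). ennreal (indicator X x' * p x x')) \<in> borel_measurable (\<rho>0 \<Otimes>\<^sub>M lborel)"
    by (simp add: measurable_cong_sets[OF sets_eq])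
  have "Measurable.pred (\<rho>0 \<Otimes>\<^sub>M lborel) (\<lambda>z. P (fst z))"
    unfolding measurable_cong_sets[OF sets_eq refl] by measurable
  then have "{z \<in> space (\<rho>0 \<Otimes>\<^sub>M lborel). P (fst z)} \<in> sets (\<rho>0 \<Otimes>\<^sub>M lborel)"
    unfolding Measurable.pred_def .
  then have "AE z in \<rho>0 \<Otimes>\<^sub>M lborel. P (fst z)"
    by (rule AE_pair_measure) (use \<open>AE x in \<rho>0. P x\<close> in \<open>auto elim!: eventually_mono\<close>)
  then show ?thesis
    unfolding markov_joint_def by (subst AE_density[OF density_meas]) (auto elim: eventually_mono)
qed

lemma AE_future_dist_snd:
  assumes J_sets: "sets J = sets (borel \<Otimes>\<^sub>M borel)" and [measurable]: "Measurable.pred borel P"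
    and "AE x in future_dist J. P x"
  shows "AE z in J. P (snd z)"
proof -
  have "snd \<in> measurable J borel"
    by (simp add: measurable_cong_sets[OF J_sets])
  then show ?thesis
    using assms(3) unfolding future_dist_def by (subst (asm) AE_distr_iff) auto
qed

theorem theoremE2:
  fixes \<rho>0 :: "(real^'d) measure"
    and p :: "real^'d \<Rightarrow> real^'d \<Rightarrow> real"
    and X :: "(real^'d) set"
    and f g :: "real^'d \<Rightarrow> real^'k"
    and R \<delta> :: real
    and N N0 N1 :: nat
    and M :: "'w measure"
    and Z :: "nat \<Rightarrow> 'w \<Rightarrow> (real^'d) \<times> (real^'d)"
    and U W :: "nat \<Rightarrow> 'w \<Rightarrow> real^'d"
  assumes X_meas: "X \<in> sets lborel"
    and rho0_prob: "prob_space \<rho>0" and rho0_sets: "sets \<rho>0 = sets borel"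
    and rho0_X: "AE x in \<rho>0. x \<in> X"
    and p_meas: "(\<lambda>(x, x'). p x x') \<in> borel_measurable (borel \<Otimes>\<^sub>M borel)"
    and p_nonneg: "\<And>x x'. p x x' \<ge> 0"
    and p_normal: "\<And>x. x \<in> X \<Longrightarrow> (\<integral>\<^sup>+ x'. ennreal (indicator X x' * p x x') \<partial>lborel) = 1"
    and f_meas: "f \<in> borel_measurable borel" and g_meas: "g \<in> borel_measurable borel"
    and R_pos: "R > 0"
    and f_bdd: "AE x in \<rho>0. norm (f x) \<le> R"
    and g_bdd: "AE x' in future_dist (markov_joint \<rho>0 p X). norm (g x') \<le> R"
    and Vf_nz: "var_mat \<rho>0 f \<noteq> 0"
    and Vg_nz: "var_mat (future_dist (markov_joint \<rho>0 p X)) g \<noteq> 0"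
    and delta: "0 < \<delta>" "\<delta> < 1"
    and N_pos: "N > 0" and N0_pos: "N0 > 0" and N1_pos: "N1 > 0"
    and M_prob: "prob_space M"
    and Z_indep: "prob_space.indep_vars M (\<lambda>_. borel \<Otimes>\<^sub>M borel) Z {..<N}"
    and Z_dist: "\<And>t. t < N \<Longrightarrow> distr M (borel \<Otimes>\<^sub>M borel) (Z t) = markov_joint \<rho>0 p X"
    and U_indep: "prob_space.indep_vars M (\<lambda>_. borel) U {..<N0}"
    and U_dist: "\<And>i. i < N0 \<Longrightarrow> distr M borel (U i) = \<rho>0"
    and W_indep: "prob_space.indep_vars M (\<lambda>_. borel) W {..<N1}"
    and W_dist: "\<And>j. j < N1 \<Longrightarrow> distr M borel (W j) = future_dist (markov_joint \<rho>0 p X)"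
    and UW_indep: "prob_space.indep_var M
        (Pi\<^sub>M {..<N0} (\<lambda>_. borel)) (\<lambda>\<omega>. \<lambda>i\<in>{..<N0}. U i \<omega>)
        (Pi\<^sub>M {..<N1} (\<lambda>_. borel)) (\<lambda>\<omega>. \<lambda>j\<in>{..<N1}. W j \<omega>)"
  shows "measure M {\<omega> \<in> space M.
      \<bar>emp_lora f g (\<lambda>t. Z t \<omega>) N (\<lambda>i. U i \<omega>) N0 (\<lambda>j. W j \<omega>) N1
        - lora (markov_joint \<rho>0 p X) \<rho>0 (future_dist (markov_joint \<rho>0 p X)) f g\<bar>
      \<le> R\<^sup>2 * (sqrt (16 / real N * ln (6 / \<delta>)) + 8 / (3 * real N) * ln (6 / \<delta>)
          + sqrt (2 * opnorm (var_mat \<rho>0 f) / real N0 * ln (12 * intdim (var_mat \<rho>0 f) / \<delta>))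
          + 2 * R\<^sup>2 / (3 * real N0) * ln (12 * intdim (var_mat \<rho>0 f) / \<delta>)
          + sqrt (2 * opnorm (var_mat (future_dist (markov_joint \<rho>0 p X)) g) / real N1
                  * ln (12 * intdim (var_mat (future_dist (markov_joint \<rho>0 p X)) g) / \<delta>))
          + 2 * R\<^sup>2 / (3 * real N1)
                  * ln (12 * intdim (var_mat (future_dist (markov_joint \<rho>0 p X)) g) / \<delta>))}
    \<ge> 1 - \<delta>"
proof -
  define J where "J = markov_joint \<rho>0 p X"
  define \<rho>1 where "\<rho>1 = future_dist J"
  interpret M: prob_space M by (rule M_prob)
  have "Z 0 \<in> measurable M (borel \<Otimes>\<^sub>M borel)" "W 0 \<in> borel_measurable M"
    using Z_indep W_indep N_pos N1_pos unfolding M.indep_vars_def by auto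
  moreover have "distr M (borel \<Otimes>\<^sub>M borel) (Z 0) = J" "distr M borel (W 0) = \<rho>1"
    using Z_dist[OF N_pos] W_dist[OF N1_pos] by (simp_all add: J_def \<rho>1_def)
  ultimately have J: "prob_space J" "sets J = sets (borel \<Otimes>\<^sub>M borel)"
    and \<rho>1: "prob_space \<rho>1" "sets \<rho>1 = sets borel"
    by (auto intro: M.prob_space_distr)
  have f: "bounded_feature \<rho>0 f R" and g: "bounded_feature \<rho>1 g R"
    using rho0_prob \<rho>1 f_meas g_meas f_bdd g_bdd[folded J_def, folded \<rho>1_def] R_pos
    by (auto intro!: bounded_feature.intro simp: measurable_cong_sets[OF rho0_sets] measurable_cong_sets[OF \<rho>1(2)])
  have f_J: "AE z in J. norm (f (fst z)) \<le> R"
    unfolding J_def using f_meas by (intro AE_markov_joint_fst[OF rho0_prob rho0_sets X_meas p_meas _ f_bdd]) measurable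
  have g_J: "AE z in J. norm (g (snd z)) \<le> R"
    using g_meas g_bdd[folded J_def] by (intro AE_future_dist_snd[OF J(2)]) measurable
  interpret lora_sampling M J \<rho>0 \<rho>1 f g R N N0 N1 Z U W
    using M_prob J \<rho>1 f g rho0_sets f_J g_J Vf_nz Vg_nz N_pos N0_pos N1_pos
      Z_indep Z_dist U_indep U_dist W_indep W_dist UW_indep
    by (intro lora_sampling.intro) (simp_all add: J_def \<rho>1_def)
  show ?thesis
    using deviation_bound_confidence[OF delta] by (simp add: J_def \<rho>1_def)
qed

end
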